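(* Let $k$ be a field containing a primitive $m$-th root of unity $\omega$ (and all $m$-th roots of unity). Let $\mathcal A$ be a perfect $k$-algebra and $S$ a commutative, associative, unital $k$-algebra such that the map $\psi:C(\mathcal A)\otimes S\to C(\mathcal A\otimes S)$, $\gamma\otimes s\mapsto\gamma\otimes L_s$, is an isomorphism. Let $\sigma_1,\sigma_2$ be automorphisms of period $m$ of $\mathcal A$ and $S$ respectively, and consider the $\mathbb Z_m$-gradings they induce. Then $\mathcal D(\mathcal A\otimes S)=\sum_{\bar j\in\mathbb Z_m}\mathcal D(\mathcal A\otimes S)_{\bar j}$ and for each $\bar j\in\mathbb Z_m$, $$\mathcal D(\mathcal A\otimes S)_{\bar j}=\big(\mathcal D(\mathcal A)\overleftarrow{\otimes} S\big)_{\bar j}\oplus\big(C(\mathcal A)\overrightarrow{\otimes}\mathcal D(S)\big)_{\bar j},$$ where $\big(\mathcal D(\mathcal A)\overleftarrow{\otimes} S\big)_{\bar j}:=\big(\mathcal D(\mathcal A)\overleftarrow{\otimes} S\big)\cap\mathcal D(\mathcal A\otimes S)_{\bar j}$ and $\big(C(\mathcal A)\overrightarrow{\otimes}\mathcal D(S)\big)_{\bar j}:=\big(C(\mathcal A)\overrightarrow{\otimes}\mathcal D(S)\big)\cap\mathcal D(\mathcal A\otimes S)_{\bar j}$, and moreover $$\big(\mathcal D(\mathcal A)\overleftarrow{\otimes} S\big)_{\bar j}=\sum_{\bar k\in\mathbb Z_m}\mathcal D(\mathcal A)_{\bar k}\overleftarrow{\otimes} S_{\bar j-\bar k},\qquad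 \big(C(\mathcal A)\overrightarrow{\otimes}\mathcal D(S)\big)_{\bar j}=\sum_{\bar k\in\mathbb Z_m}C(\mathcal A)_{\bar k}\overrightarrow{\otimes}\mathcal D(S)_{\bar j-\bar k}.$$
   Context: Algebras are $k$-vector spaces with bilinear product (not necessarily associative); perfect means $\mathcal A\mathcal A=\mathcal A$; $C(\mathcal A)=\{\gamma\in\operatorname{End}(\mathcal A)\mid\gamma(xy)=\gamma(x)y=x\gamma(y)\}$ is the centroid; $\mathcal D(\cdot)$ denotes derivations; $L_s$ is left multiplication. Period $m$ means $\sigma^m=\mathrm{id}$. For a period-$m$ automorphism $\sigma$ of $\mathcal A$, $\mathcal A_{\bar i}=\{a\mid\sigma(a)=\omega^ia\}$; $\sigma^*(T)=\sigma T\sigma^{-1}$ on $\operatorname{End}(\mathcal A)$ gives $\operatorname{End}(\mathcal A)_{\bar i}=\{T\mid T(\mathcal A_{\bar j})\subseteq\mathcal A_{\bar i+\bar j}\ \forall\bar j\}$, and $\mathcal D(\mathcal A)_{\bar i}=\mathcal D(\mathcal A)\cap\operatorname{End}(\mathcal A)_{\bar i}$, $C(\mathcal A)_{\bar i}=C(\mathcal A)\cap\operatorname{End}(\mathcal A)_{\bar i}$; similarly for $S$ with $\sigma_2$, and for $\mathcal A\otimes S$ with $\sigma=\sigma_1\otimes\sigma_2$, so $(\mathcal A\otimes S)_{\bar i}=\sum_{\bar j}\mathcal A_{\bar i-\bar j}\otimes S_{\bar j}$ and $\mathcal D(\mathcal A\otimes S)_{\bar i}$ are the derivations mapping $(\mathcal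 A\otimes S)_{\bar j}$ into $(\mathcal A\otimes S)_{\bar i+\bar j}$ for all $\bar j$. A family $\{f_i\}$ of endomorphisms of $V$ is summable if for each $v$, $f_i(v)=0$ for all but finitely many $i$. For subspaces $E_V\subseteq\operatorname{End}(V)$, $E_W\subseteq\operatorname{End}(W)$: $E_V\overleftarrow{\otimes}E_W$ is the set of operators $\sum_if_i\otimes g_i$ on $V\otimes W$ with $\{f_i\}\subseteq E_V$ summable on $V$ and $\{g_i\}\subseteq E_W$ arbitrary; given a basis $\{f_i\}$ of $E_V$, $E_V\overrightarrow{\otimes}E_W$ is the set of $\sum_if_i\otimes g_i$ with $\{g_i\}\subseteq E_W$ summable on $W$. $S$ and its subspaces $S_{\bar k}$ are viewed in $\operatorname{End}(S)$ via left multiplication; everything is regarded inside $\operatorname{End}(\mathcal A\otimes S)$. *)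

theory Defs
  imports "HOL-Library.Poly_Mapping"
begin

text \<open>Vector spaces over the field 'k are modelled by a chosen basis: a k-vector space
with basis indexed by the type 'a is the space of finitely supported functions
'a =>0 'k.  Every vector space is of this form (up to isomorphism),
and an algebra structure is an arbitrary bilinear product on it.\<close>

type_synonym ('a,'k) vec = "'a \<Rightarrow>\<^sub>0 'k"
type_synonym ('a,'k) op = "('a \<Rightarrow>\<^sub>0 'k) \<Rightarrow> ('a \<Rightarrow>\<^sub>0 'k)"
type_synonym ('a,'k) prod = "('a \<Rightarrow>\<^sub>0 'k) \<Rightarrow> ('a \<Rightarrow>\<^sub>0 'k) \<Rightarrow> ('a \<Rightarrow>\<^sub>0 'k)"

definition sc :: "'k::field \<Rightarrow> ('a,'k) vec \<Rightarrow> ('a,'k) vec" where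
  "sc r x = Poly_Mapping.map (\<lambda>c. r * c) x"

definition lin :: "('a,'k::field) op \<Rightarrow> bool" where
  "lin T \<longleftrightarrow> (\<forall>x y. T (x + y) = T x + T y) \<and> (\<forall>r x. T (sc r x) = sc r (T x))"

definition bilin :: "('a,'k::field) prod \<Rightarrow> bool" where
  "bilin M \<longleftrightarrow> (\<forall>x. lin (M x)) \<and> (\<forall>y. lin (\<lambda>x. M x y))"

definition perfect :: "('a,'k::field) prod \<Rightarrow> bool" where
  "perfect M \<longleftrightarrow> (\<forall>x. \<exists>ps. x = sum_list (map (\<lambda>(a,b). M a b) ps))"

definition centroid :: "('a,'k::field) prod \<Rightarrow> ('a,'k) op set" where
  "centroid M = {\<gamma>. lin \<gamma> \<and> (\<forall>x y. \<gamma> (M x y) = M (\<gamma> x) y \<and> \<gamma> (M x y) = M x (\<gamma> y))}"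

definition derivations :: "('a,'k::field) prod \<Rightarrow> ('a,'k) op set" where
  "derivations M = {d. lin d \<and> (\<forall>x y. d (M x y) = M (d x) y + M x (d y))}"

definition comm_assoc_unital :: "('a,'k::field) prod \<Rightarrow> bool" where
  "comm_assoc_unital M \<longleftrightarrow> (\<forall>x y. M x y = M y x) \<and> (\<forall>x y z. M (M x y) z = M x (M y z))
     \<and> (\<exists>e. \<forall>x. M e x = x)"

definition automorphism :: "('a,'k::field) prod \<Rightarrow> ('a,'k) op \<Rightarrow> bool" where
  "automorphism M \<sigma> \<longleftrightarrow> lin \<sigma> \<and> bij \<sigma> \<and> (\<forall>x y. \<sigma> (M x y) = M (\<sigma> x) (\<sigma> y))"

text \<open>Homogeneous component of degree i (i taken mod m): eigenspace for \<omega>^i.\<close>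
definition eigsp :: "'k::field \<Rightarrow> ('a,'k) op \<Rightarrow> nat \<Rightarrow> ('a,'k) vec set" where
  "eigsp \<omega> \<sigma> i = {x. \<sigma> x = sc (\<omega> ^ i) x}"

definition End_deg :: "nat \<Rightarrow> 'k::field \<Rightarrow> ('a,'k) op \<Rightarrow> nat \<Rightarrow> ('a,'k) op set" where
  "End_deg m \<omega> \<sigma> i = {T. lin T \<and> (\<forall>j<m. \<forall>x\<in>eigsp \<omega> \<sigma> j. T x \<in> eigsp \<omega> \<sigma> ((i + j) mod m))}"

definition ebas :: "'a \<Rightarrow> ('a,'k::field) vec" where
  "ebas a = Poly_Mapping.single a 1"

text \<open>x \<otimes> s in A \<otimes> S, where A \<otimes> S has basis 'a \<times> 'b.\<close>
definition tens :: "('a,'k::field) vec \<Rightarrow> ('b,'k) vec \<Rightarrow> ('a \<times> 'b,'k) vec" where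
  "tens x s = (\<Sum>l\<in>Poly_Mapping.keys x. \<Sum>r\<in>Poly_Mapping.keys s. Poly_Mapping.single (l,r) (Poly_Mapping.lookup x l * Poly_Mapping.lookup s r))"

text \<open>Product of the tensor product algebra: (x\<otimes>s)(y\<otimes>t) = xy \<otimes> st, bilinearly extended.\<close>
definition tmult :: "('a,'k::field) prod \<Rightarrow> ('b,'k) prod \<Rightarrow> ('a \<times> 'b,'k) prod" where
  "tmult MA MS u v = (\<Sum>(i,p)\<in>Poly_Mapping.keys u. \<Sum>(j,q)\<in>Poly_Mapping.keys v.
      sc (Poly_Mapping.lookup u (i,p) * Poly_Mapping.lookup v (j,q)) (tens (MA (ebas i) (ebas j)) (MS (ebas p) (ebas q))))"

definition optens :: "('a,'k::field) op \<Rightarrow> ('b,'k) op \<Rightarrow> ('a \<times> 'b,'k) op" where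
  "optens f g u = (\<Sum>(a,p)\<in>Poly_Mapping.keys u. sc (Poly_Mapping.lookup u (a,p)) (tens (f (ebas a)) (g (ebas p))))"

definition summable_fam :: "('i \<Rightarrow> ('a,'k::field) op) \<Rightarrow> bool" where
  "summable_fam F \<longleftrightarrow> (\<forall>v. finite {i. F i v \<noteq> 0})"

definition opsum :: "('i \<Rightarrow> ('a,'k::field) op) \<Rightarrow> ('a,'k) op" where
  "opsum F u = (\<Sum>i\<in>{i. F i u \<noteq> 0}. F i u)"

text \<open>E_V \<otimes>(left arrow) E_W.  A summable family on V with basis 'a has at most
|'a \<times> nat| nonzero members, so indexing by 'a \<times> nat loses no generality.\<close>
definition ltensor :: "('a,'k::field) op set \<Rightarrow> ('b,'k) op set \<Rightarrow> ('a \<times> 'b,'k) op set" where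
  "ltensor EV EW = {opsum (\<lambda>i. optens (f i) (g i)) | f g :: 'a \<times> nat \<Rightarrow> _.
      (\<forall>i. f i \<in> EV) \<and> (\<forall>i. g i \<in> EW) \<and> summable_fam f}"

text \<open>E_V \<otimes>(right arrow) E_W with respect to the basis B of E_V: the family is indexed
by the basis elements themselves.\<close>
definition rtensor :: "('a,'k::field) op set \<Rightarrow> ('b,'k) op set \<Rightarrow> ('a \<times> 'b,'k) op set" where
  "rtensor B EW = {opsum (\<lambda>\<gamma>. optens \<gamma> (g \<gamma>)) | g.
      (\<forall>\<gamma>\<in>B. g \<gamma> \<in> EW) \<and> (\<forall>\<gamma>. \<gamma> \<notin> B \<longrightarrow> g \<gamma> = (\<lambda>_. 0)) \<and> summable_fam g}"

definition is_basis :: "('a,'k::field) op set \<Rightarrow> ('a,'k) op set \<Rightarrow> bool" where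
  "is_basis E B \<longleftrightarrow> B \<subseteq> E
     \<and> (\<forall>F c. finite F \<and> F \<subseteq> B \<and> (\<lambda>x. \<Sum>f\<in>F. sc (c f) (f x)) = (\<lambda>x. 0) \<longrightarrow> (\<forall>f\<in>F. c f = 0))
     \<and> (\<forall>T\<in>E. \<exists>F c. finite F \<and> F \<subseteq> B \<and> T = (\<lambda>x. \<Sum>f\<in>F. sc (c f) (f x)))"

text \<open>S (or a subspace X of S) viewed inside End(S) by left multiplication.\<close>
definition Lset :: "('b,'k::field) prod \<Rightarrow> ('b,'k) vec set \<Rightarrow> ('b,'k) op set" where
  "Lset M X = {M s | s. s \<in> X}"

definition zsum :: "nat \<Rightarrow> (nat \<Rightarrow> ('a,'k::field) op set) \<Rightarrow> ('a,'k) op set" where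
  "zsum m E = {(\<lambda>u. \<Sum>k<m. T k u) | T. \<forall>k<m. T k \<in> E k}"

definition direct_sum :: "('a,'k::field) op set \<Rightarrow> ('a,'k) op set \<Rightarrow> ('a,'k) op set \<Rightarrow> bool" where
  "direct_sum D P Q \<longleftrightarrow> D = {(\<lambda>u. x u + y u) | x y. x \<in> P \<and> y \<in> Q} \<and> P \<inter> Q = {(\<lambda>u. 0)}"

text \<open>psi : C(A) \<otimes> S \<rightarrow> C(A \<otimes> S), \<gamma> \<otimes> s \<mapsto> \<gamma> \<otimes> L_s, is an isomorphism.
An element \<Sum> \<gamma>_i \<otimes> s_i of C(A) \<otimes> S is realised (injectively) as the map
a \<mapsto> \<Sum> \<gamma>_i(a) \<otimes> s_i from A to A \<otimes> S.\<close>
definition psi_iso :: "('a,'k::field) prod \<Rightarrow> ('b,'k) prod \<Rightarrow> bool" where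
  "psi_iso MA MS \<longleftrightarrow>
     (\<forall>\<gamma>\<in>centroid MA. \<forall>s. optens \<gamma> (MS s) \<in> centroid (tmult MA MS))
   \<and> (\<forall>ps. (\<forall>(\<gamma>,s)\<in>set ps. \<gamma> \<in> centroid MA) \<and>
          (\<lambda>u. sum_list (map (\<lambda>(\<gamma>,s). optens \<gamma> (MS s) u) ps)) = (\<lambda>u. 0)
          \<longrightarrow> (\<forall>a. sum_list (map (\<lambda>(\<gamma>,s). tens (\<gamma> a) s) ps) = 0))
   \<and> (\<forall>\<Gamma>\<in>centroid (tmult MA MS). \<exists>ps. (\<forall>(\<gamma>,s)\<in>set ps. \<gamma> \<in> centroid MA) \<and>
          \<Gamma> = (\<lambda>u. sum_list (map (\<lambda>(\<gamma>,s). optens \<gamma> (MS s) u) ps)))"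

end

theory Submission
  imports Defs "HOL-Computational_Algebra.Primes" "HOL-Library.Countable_Set"
begin

text \<open>A derivation \<open>d\<close> of \<open>A \<otimes> S\<close> splits in two steps. Its slices \<open>x \<mapsto> slice r (d (x \<otimes> e))\<close>
  along a basis of \<open>S\<close> are derivations of \<open>A\<close>; paired with the multiplications \<open>L\<^bsub>ebas r\<^esub>\<close>
  they give \<open>X \<in> Der(A) \<otimes>\<leftarrow> S\<close> agreeing with \<open>d\<close> on \<open>A \<otimes> e\<close>. The rest \<open>D = d - X\<close> kills
  \<open>A \<otimes> e\<close>, so for every \<open>s\<close> the commutator \<open>[D, id \<otimes> L\<^sub>s]\<close>, which lies in the centroid of
  \<open>A \<otimes> S\<close> and hence (via \<open>\<psi>\<close>) in \<open>C(A) \<otimes> S\<close>, computes \<open>D (x \<otimes> s)\<close>. Expanding in the basis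
  \<open>BC\<close> of \<open>C(A)\<close> writes \<open>D (x \<otimes> s) = \<Sum>\<^sub>\<gamma> \<gamma> x \<otimes> h\<^sub>\<gamma> s\<close>, and since \<open>A\<close> is perfect and \<open>BC\<close>
  independent, every \<open>h\<^sub>\<gamma>\<close> is a derivation of \<open>S\<close>: \<open>D \<in> C(A) \<otimes>\<rightarrow> Der(S)\<close>. The two parts
  meet only in \<open>0\<close>, because derivations of \<open>S\<close> kill the unit \<open>e\<close>.

  For the gradings, a primitive \<open>m\<close>-th root of unity makes \<open>m\<close> invertible in \<open>k\<close>, so averaging
  over the powers of \<open>\<sigma>\<close> projects onto the eigenspaces and every operator is the sum of its
  homogeneous components. These components of derivations and centroid elements are again
  derivations and centroid elements, so splitting both tensor factors of \<open>X\<close> and \<open>D\<close> into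
  homogeneous parts and regrouping by total degree gives the graded statements.\<close>

definition lin_map :: "(('a,'k::field) vec \<Rightarrow> ('c,'k) vec) \<Rightarrow> bool" where
  "lin_map f \<longleftrightarrow> (\<forall>x y. f (x + y) = f x + f y) \<and> (\<forall>r x. f (sc r x) = sc r (f x))"

lemma lin_iff_lin_map: "lin T = lin_map T"
  by (simp add: lin_def lin_map_def)

lemma bilin_lin_map_left: "bilin M \<Longrightarrow> lin_map (\<lambda>x. M x y)"
  by (simp add: bilin_def lin_iff_lin_map)

lemma bilin_lin_map_right: "bilin M \<Longrightarrow> lin_map (M x)"
  by (simp add: bilin_def lin_iff_lin_map)

lemma derivation_lin_map: "d \<in> derivations M \<Longrightarrow> lin_map d"
  by (simp add: derivations_def lin_iff_lin_map)

lemma centroid_lin_map: "\<gamma> \<in> centroid M \<Longrightarrow> lin_map \<gamma>"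
  by (simp add: centroid_def lin_iff_lin_map)

lemma lookup_sc [simp]: "Poly_Mapping.lookup (sc r x) a = r * Poly_Mapping.lookup x a"
  by (simp add: sc_def map.rep_eq when_def)

lemma sc_zero_right [simp]: "sc r 0 = 0"
  by (rule poly_mapping_eqI) simp

lemma sc_zero_left [simp]: "sc 0 x = 0"
  by (rule poly_mapping_eqI) simp

lemma sc_one [simp]: "sc 1 x = x"
  by (rule poly_mapping_eqI) simp

lemma sc_sc [simp]: "sc a (sc b x) = sc (a * b) x"
  by (rule poly_mapping_eqI) simp

lemma sc_add_right: "sc a (x + y) = sc a x + sc a y"
  by (rule poly_mapping_eqI) (simp add: lookup_add algebra_simps)

lemma sc_add_left: "sc (a + b) x = sc a x + sc b x"
  by (rule poly_mapping_eqI) (simp add: lookup_add algebra_simps)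

lemma sc_diff_right: "sc a (x - y) = sc a x - sc a y"
  by (rule poly_mapping_eqI) (simp add: lookup_minus algebra_simps)

lemma sc_minus_one: "sc (-1) y = - y"
  by (rule poly_mapping_eqI) simp

lemma sc_sum_right: "sc a (sum f A) = (\<Sum>i\<in>A. sc a (f i))"
  by (rule poly_mapping_eqI) (simp add: lookup_sum sum_distrib_left)

lemma sc_sum_left: "sc (sum f A) x = (\<Sum>i\<in>A. sc (f i) x)"
  by (rule poly_mapping_eqI) (simp add: lookup_sum sum_distrib_right)

lemma lin_map_zero: "lin_map f \<Longrightarrow> f 0 = 0"
  by (metis lin_map_def sc_zero_left)

lemma lin_map_add: "lin_map f \<Longrightarrow> f (x + y) = f x + f y"
  by (simp add: lin_map_def)

lemma lin_map_sc: "lin_map f \<Longrightarrow> f (sc r x) = sc r (f x)"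
  by (simp add: lin_map_def)

lemma lin_map_uminus: "lin_map f \<Longrightarrow> f (- x) = - f x"
  by (metis lin_map_sc sc_minus_one)

lemma lin_map_diff: "lin_map f \<Longrightarrow> f (x - y) = f x - f y"
  using lin_map_add[of f x "- y"] by (simp add: lin_map_uminus)

lemma lin_map_sum: "lin_map f \<Longrightarrow> f (sum g A) = (\<Sum>i\<in>A. f (g i))"
  by (induction A rule: infinite_finite_induct) (auto simp: lin_map_zero lin_map_add)

lemma lin_map_sum_list: "lin_map f \<Longrightarrow> f (sum_list xs) = sum_list (map f xs)"
  by (induction xs) (auto simp: lin_map_zero lin_map_add)

lemma lin_map_id [simp]: "lin_map (\<lambda>x. x)"
  by (simp add: lin_map_def)

lemma lin_map_0 [simp]: "lin_map (\<lambda>x. 0)"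
  by (simp add: lin_map_def)

lemma lin_map_compose: "lin_map f \<Longrightarrow> lin_map g \<Longrightarrow> lin_map (\<lambda>x. f (g x))"
  by (simp add: lin_map_def)

lemma lin_map_plus: "lin_map f \<Longrightarrow> lin_map g \<Longrightarrow> lin_map (\<lambda>x. f x + g x)"
  by (simp add: lin_map_def sc_add_right)

lemma lin_map_minus: "lin_map f \<Longrightarrow> lin_map g \<Longrightarrow> lin_map (\<lambda>x. f x - g x)"
  by (simp add: lin_map_def sc_diff_right)

lemma lin_map_scale: "lin_map f \<Longrightarrow> lin_map (\<lambda>x. sc r (f x))"
  by (simp add: lin_map_def sc_add_right mult.commute)

lemma lin_map_sum_fun: "(\<And>i. i \<in> A \<Longrightarrow> lin_map (f i)) \<Longrightarrow> lin_map (\<lambda>x. \<Sum>i\<in>A. f i x)"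
  unfolding lin_map_def by (auto simp: sum.distrib sc_sum_right)

lemma lin_map_funpow:
  fixes f :: "('a,'k::field) op"
  assumes "lin_map f"
  shows "lin_map (f ^^ n)"
proof (induction n)
  case (Suc n)
  then show ?case using lin_map_compose[OF assms Suc.IH] by simp
qed simp

lemma lookup_ebas: "Poly_Mapping.lookup (ebas a) b = (if a = b then 1 else 0)"
  by (simp add: ebas_def lookup_single when_def)

lemma vec_eq_sum_ebas: "x = (\<Sum>a\<in>Poly_Mapping.keys x. sc (Poly_Mapping.lookup x a) (ebas a))"
proof (rule poly_mapping_eqI)
  fix b
  show "Poly_Mapping.lookup x b = Poly_Mapping.lookup (\<Sum>a\<in>Poly_Mapping.keys x. sc (Poly_Mapping.lookup x a) (ebas a)) b"
    by (simp add: lookup_sum lookup_ebas in_keys_iff if_distrib cong: if_cong)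
qed

lemma sum_keys_superset:
  assumes "finite K" "Poly_Mapping.keys x \<subseteq> K"
  shows "(\<Sum>a\<in>Poly_Mapping.keys x. sc (Poly_Mapping.lookup x a) (T a))
       = (\<Sum>a\<in>K. sc (Poly_Mapping.lookup x a) (T a))"
  by (rule sum.mono_neutral_left) (use assms in \<open>auto simp: in_keys_iff\<close>)

lemma lin_map_eq_sum_ebas:
  "lin_map f \<Longrightarrow> f x = (\<Sum>a\<in>Poly_Mapping.keys x. sc (Poly_Mapping.lookup x a) (f (ebas a)))"
  by (subst vec_eq_sum_ebas) (simp add: lin_map_sum lin_map_sc)

lemma lin_map_eqI_ebas: "lin_map f \<Longrightarrow> lin_map g \<Longrightarrow> (\<And>a. f (ebas a) = g (ebas a)) \<Longrightarrow> f = g"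
  by (rule ext) (metis (no_types, lifting) lin_map_eq_sum_ebas sum.cong)

lemma lin_map_sum_keys:
  fixes W :: "'a \<Rightarrow> ('c,'k::field) vec"
  shows "lin_map (\<lambda>u. \<Sum>q\<in>Poly_Mapping.keys u. sc (Poly_Mapping.lookup u q) (W q))"
proof -
  have "(\<Sum>q\<in>Poly_Mapping.keys (u + v). sc (Poly_Mapping.lookup (u + v) q) (W q)) =
        (\<Sum>q\<in>Poly_Mapping.keys u. sc (Poly_Mapping.lookup u q) (W q))
      + (\<Sum>q\<in>Poly_Mapping.keys v. sc (Poly_Mapping.lookup v q) (W q))" for u v :: "('a,'k) vec"
  proof -
    let ?K = "Poly_Mapping.keys u \<union> Poly_Mapping.keys v"
    have "(\<Sum>q\<in>Poly_Mapping.keys (u + v). sc (Poly_Mapping.lookup (u + v) q) (W q)) =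
        (\<Sum>q\<in>?K. sc (Poly_Mapping.lookup (u + v) q) (W q))"
      by (rule sum_keys_superset) (auto simp: keys_add)
    also have "\<dots> = (\<Sum>q\<in>?K. sc (Poly_Mapping.lookup u q) (W q)) + (\<Sum>q\<in>?K. sc (Poly_Mapping.lookup v q) (W q))"
      by (simp add: lookup_add sc_add_left sum.distrib)
    also have "\<dots> = (\<Sum>q\<in>Poly_Mapping.keys u. sc (Poly_Mapping.lookup u q) (W q))
        + (\<Sum>q\<in>Poly_Mapping.keys v. sc (Poly_Mapping.lookup v q) (W q))"
      by (simp add: sum_keys_superset[of ?K u W] sum_keys_superset[of ?K v W])
    finally show ?thesis .
  qed
  moreover have "(\<Sum>q\<in>Poly_Mapping.keys (sc r u). sc (Poly_Mapping.lookup (sc r u) q) (W q)) =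
      sc r (\<Sum>q\<in>Poly_Mapping.keys u. sc (Poly_Mapping.lookup u q) (W q))" for r and u :: "('a,'k) vec"
  proof -
    have "(\<Sum>q\<in>Poly_Mapping.keys (sc r u). sc (Poly_Mapping.lookup (sc r u) q) (W q)) =
        (\<Sum>q\<in>Poly_Mapping.keys u. sc (Poly_Mapping.lookup (sc r u) q) (W q))"
      by (rule sum_keys_superset) (auto simp: in_keys_iff)
    then show ?thesis by (simp add: sc_sum_right)
  qed
  ultimately show ?thesis unfolding lin_map_def by blast
qed

subsection \<open>Tensor products\<close>

lemma lookup_tens: "Poly_Mapping.lookup (tens x s) q = Poly_Mapping.lookup x (fst q) * Poly_Mapping.lookup s (snd q)"
proof -
  obtain a p where q: "q = (a, p)" by (cases q)
  have "Poly_Mapping.lookup (tens x s) (a, p) =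
    (\<Sum>l\<in>Poly_Mapping.keys x. \<Sum>r\<in>Poly_Mapping.keys s.
       if l = a \<and> r = p then Poly_Mapping.lookup x l * Poly_Mapping.lookup s r else 0)"
    by (simp add: tens_def lookup_sum lookup_single when_def)
  also have "\<dots> = (\<Sum>l\<in>Poly_Mapping.keys x. if l = a then Poly_Mapping.lookup x l * Poly_Mapping.lookup s p else 0)"
    by (rule sum.cong) (auto simp: if_distrib[symmetric] in_keys_iff sum.delta cong: if_cong)
  also have "\<dots> = Poly_Mapping.lookup x a * Poly_Mapping.lookup s p"
    by (auto simp: in_keys_iff)
  finally show ?thesis by (simp add: q)
qed

lemma tens_add_left: "tens (x + y) s = tens x s + tens y s"
  by (rule poly_mapping_eqI) (simp add: lookup_tens lookup_add algebra_simps)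

lemma tens_add_right: "tens x (s + t) = tens x s + tens x t"
  by (rule poly_mapping_eqI) (simp add: lookup_tens lookup_add algebra_simps)

lemma tens_sc_left: "tens (sc r x) s = sc r (tens x s)"
  by (rule poly_mapping_eqI) (simp add: lookup_tens algebra_simps)

lemma tens_sc_right: "tens x (sc r s) = sc r (tens x s)"
  by (rule poly_mapping_eqI) (simp add: lookup_tens algebra_simps)

lemma tens_zero_left [simp]: "tens 0 s = 0"
  by (rule poly_mapping_eqI) (simp add: lookup_tens)

lemma tens_zero_right [simp]: "tens x 0 = 0"
  by (rule poly_mapping_eqI) (simp add: lookup_tens)

lemma tens_diff_right: "tens x (s - t) = tens x s - tens x t"
  by (rule poly_mapping_eqI) (simp add: lookup_tens lookup_minus algebra_simps)

lemma tens_sum_left: "tens (sum f A) s = (\<Sum>i\<in>A. tens (f i) s)"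
  by (rule poly_mapping_eqI) (simp add: lookup_tens lookup_sum sum_distrib_right)

lemma tens_sum_right: "tens x (sum f A) = (\<Sum>i\<in>A. tens x (f i))"
  by (rule poly_mapping_eqI) (simp add: lookup_tens lookup_sum sum_distrib_left)

lemma lin_map_tens_left: "lin_map (\<lambda>x. tens x s)"
  by (simp add: lin_map_def tens_add_left tens_sc_left)

lemma lin_map_tens_right: "lin_map (\<lambda>s. tens x s)"
  by (simp add: lin_map_def tens_add_right tens_sc_right)

lemma keys_ebas [simp]: "Poly_Mapping.keys (ebas q) = {q}"
  by (simp add: ebas_def)

lemma tens_ebas: "tens (ebas a) (ebas p) = ebas (a, p)"
  by (rule poly_mapping_eqI) (auto simp: lookup_tens lookup_ebas)

lemma lin_map_eqI_tens:
  fixes f g :: "('a \<times> 'b, 'k::field) vec \<Rightarrow> ('c,'k) vec"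
  assumes "lin_map f" "lin_map g" "\<And>x s. f (tens x s) = g (tens x s)"
  shows "f = g"
proof (rule lin_map_eqI_ebas[OF assms(1,2)])
  fix q :: "'a \<times> 'b"
  show "f (ebas q) = g (ebas q)"
    using assms(3)[of "ebas (fst q)" "ebas (snd q)"] by (simp add: tens_ebas)
qed

lemma bilinear_eqI_tens:
  fixes \<Phi> \<Psi> :: "('a \<times> 'b, 'k::field) vec \<Rightarrow> ('a \<times> 'b, 'k) vec \<Rightarrow> ('c,'k) vec"
  assumes "\<And>v. lin_map (\<lambda>u. \<Phi> u v)" "\<And>u. lin_map (\<Phi> u)"
    and "\<And>v. lin_map (\<lambda>u. \<Psi> u v)" "\<And>u. lin_map (\<Psi> u)"
    and "\<And>x s y t. \<Phi> (tens x s) (tens y t) = \<Psi> (tens x s) (tens y t)"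
  shows "\<Phi> u v = \<Psi> u v"
proof -
  have "(\<lambda>u. \<Phi> u (tens y t)) = (\<lambda>u. \<Psi> u (tens y t))" for y t
    by (rule lin_map_eqI_tens) (use assms in auto)
  then have "\<Phi> u = \<Psi> u"
    by (intro lin_map_eqI_tens assms) (auto dest: fun_cong)
  then show ?thesis by simp
qed

lemma optens_eq_sum_keys:
  "optens f g u = (\<Sum>q\<in>Poly_Mapping.keys u. sc (Poly_Mapping.lookup u q) (tens (f (ebas (fst q))) (g (ebas (snd q)))))"
  by (simp add: optens_def case_prod_beta)

lemma lin_map_optens: "lin_map (optens f g)"
  unfolding optens_eq_sum_keys[abs_def] by (rule lin_map_sum_keys)

lemma optens_tens:
  assumes "lin_map f" "lin_map g"
  shows "optens f g (tens x s) = tens (f x) (g s)"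
proof -
  let ?K = "Poly_Mapping.keys x \<times> Poly_Mapping.keys s"
  have "Poly_Mapping.keys (tens x s) \<subseteq> ?K"
    by (auto simp: in_keys_iff lookup_tens)
  then have "optens f g (tens x s) =
      (\<Sum>q\<in>?K. sc (Poly_Mapping.lookup (tens x s) q) (tens (f (ebas (fst q))) (g (ebas (snd q)))))"
    unfolding optens_eq_sum_keys by (intro sum_keys_superset) auto
  also have "\<dots> = (\<Sum>a\<in>Poly_Mapping.keys x. \<Sum>p\<in>Poly_Mapping.keys s.
      tens (sc (Poly_Mapping.lookup x a) (f (ebas a))) (sc (Poly_Mapping.lookup s p) (g (ebas p))))"
    by (simp add: sum.cartesian_product lookup_tens tens_sc_left tens_sc_right mult.commute case_prod_beta)
  also have "\<dots> = tens (f x) (g s)"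
    by (simp add: lin_map_eq_sum_ebas[OF assms(1), of x] lin_map_eq_sum_ebas[OF assms(2), of s]
        tens_sum_left tens_sum_right sum.swap[of _ "Poly_Mapping.keys s"])
  finally show ?thesis .
qed

lemma optens_compose:
  assumes "lin_map f" "lin_map g" "lin_map f'" "lin_map g'"
  shows "optens f g (optens f' g' u) = optens (\<lambda>x. f (f' x)) (\<lambda>x. g (g' x)) u"
proof -
  have "(\<lambda>u. optens f g (optens f' g' u)) = optens (\<lambda>x. f (f' x)) (\<lambda>x. g (g' x))"
    by (rule lin_map_eqI_tens) (auto intro: lin_map_compose lin_map_optens simp: optens_tens assms lin_map_compose)
  then show ?thesis by (rule fun_cong)
qed

lemma optens_id: "optens (\<lambda>x. x) (\<lambda>x. x) u = u"
proof -
  have "optens (\<lambda>x. x) (\<lambda>x. x) = (\<lambda>u. u)"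
    by (rule lin_map_eqI_tens) (auto intro: lin_map_optens simp: optens_tens)
  then show ?thesis by (rule fun_cong)
qed

lemma optens_funpow:
  assumes "lin_map f" "lin_map g"
  shows "(optens f g ^^ n) u = optens (f ^^ n) (g ^^ n) u"
proof (induction n arbitrary: u)
  case 0
  then show ?case by (simp add: optens_id[unfolded id_def])
next
  case (Suc n)
  then show ?case by (simp add: optens_compose assms lin_map_funpow o_def)
qed

lemma optens_sum_left: "optens (\<lambda>x. \<Sum>i\<in>A. f i x) g u = (\<Sum>i\<in>A. optens (f i) g u)"
  by (simp add: optens_eq_sum_keys tens_sum_left sc_sum_right) (rule sum.swap)

lemma optens_sum_right: "optens f (\<lambda>x. \<Sum>i\<in>A. g i x) u = (\<Sum>i\<in>A. optens f (g i) u)"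
  by (simp add: optens_eq_sum_keys tens_sum_right sc_sum_right) (rule sum.swap)

lemma optens_sc_left: "optens (\<lambda>x. sc r (f x)) g u = sc r (optens f g u)"
  by (simp add: optens_eq_sum_keys tens_sc_left sc_sum_right mult.commute)

lemma optens_sc_right: "optens f (\<lambda>x. sc r (g x)) u = sc r (optens f g u)"
  by (simp add: optens_eq_sum_keys tens_sc_right sc_sum_right mult.commute)

lemma optens_0_left [simp]: "optens (\<lambda>x. 0) g u = 0"
  by (simp add: optens_eq_sum_keys)

lemma optens_0_right [simp]: "optens f (\<lambda>x. 0) u = 0"
  by (simp add: optens_eq_sum_keys)

lemma optens_eq_0:
  assumes "\<And>q. q \<in> Poly_Mapping.keys u \<Longrightarrow> tens (f (ebas (fst q))) (g (ebas (snd q))) = 0"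
  shows "optens f g u = 0"
  by (simp add: optens_eq_sum_keys assms)

lemma optens_cong:
  assumes "\<And>a. f (ebas a) = f' (ebas a)"
    and "\<And>q. q \<in> Poly_Mapping.keys u \<Longrightarrow> g (ebas (snd q)) = g' (ebas (snd q))"
  shows "optens f g u = optens f' g' u"
  unfolding optens_eq_sum_keys using assms by (intro sum.cong) auto

lemma tmult_eq_sum_keys_left:
  "tmult MA MS u v = (\<Sum>q\<in>Poly_Mapping.keys u. sc (Poly_Mapping.lookup u q)
     (\<Sum>q'\<in>Poly_Mapping.keys v. sc (Poly_Mapping.lookup v q')
        (tens (MA (ebas (fst q)) (ebas (fst q'))) (MS (ebas (snd q)) (ebas (snd q'))))))"
  by (simp add: tmult_def case_prod_beta sc_sum_right)

lemma tmult_eq_sum_keys_right: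
  "tmult MA MS u v = (\<Sum>q'\<in>Poly_Mapping.keys v. sc (Poly_Mapping.lookup v q')
     (\<Sum>q\<in>Poly_Mapping.keys u. sc (Poly_Mapping.lookup u q)
        (tens (MA (ebas (fst q)) (ebas (fst q'))) (MS (ebas (snd q)) (ebas (snd q'))))))"
  unfolding tmult_def case_prod_beta sc_sum_right sc_sc
  by (subst sum.swap) (simp add: mult.commute)

lemma lin_map_tmult_left: "lin_map (\<lambda>u. tmult MA MS u v)"
  unfolding tmult_eq_sum_keys_left by (rule lin_map_sum_keys)

lemma lin_map_tmult_right: "lin_map (tmult MA MS u)"
  unfolding tmult_eq_sum_keys_right[abs_def] by (rule lin_map_sum_keys)

lemma bilin_tmult: "bilin (tmult MA MS)"
  by (simp add: bilin_def lin_iff_lin_map lin_map_tmult_left lin_map_tmult_right)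

lemma tmult_tens:
  assumes A: "bilin MA" and S: "bilin MS"
  shows "tmult MA MS (tens x s) (tens y t) = tens (MA x y) (MS s t)"
proof -
  note A1 = bilin_lin_map_left[OF A] and A2 = bilin_lin_map_right[OF A]
    and S1 = bilin_lin_map_left[OF S] and S2 = bilin_lin_map_right[OF S]
  have "tmult MA MS (tens (ebas i) (ebas p)) (tens (ebas j) (ebas q)) =
      tens (MA (ebas i) (ebas j)) (MS (ebas p) (ebas q))" for i p j q
    by (simp add: tens_ebas tmult_eq_sum_keys_left lookup_ebas)
  then have "(\<lambda>t. tmult MA MS (tens (ebas i) (ebas p)) (tens (ebas j) t)) =
      (\<lambda>t. tens (MA (ebas i) (ebas j)) (MS (ebas p) t))" for i p j
    by (intro lin_map_eqI_ebas lin_map_compose[OF lin_map_tmult_right lin_map_tens_right]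
        lin_map_compose[OF lin_map_tens_right S2])
  then have "(\<lambda>y. tmult MA MS (tens (ebas i) (ebas p)) (tens y t)) =
      (\<lambda>y. tens (MA (ebas i) y) (MS (ebas p) t))" for i p t
    by (intro lin_map_eqI_ebas lin_map_compose[OF lin_map_tmult_right lin_map_tens_left]
        lin_map_compose[OF lin_map_tens_left A2]) (auto dest: fun_cong)
  then have "(\<lambda>s. tmult MA MS (tens (ebas i) s) (tens y t)) = (\<lambda>s. tens (MA (ebas i) y) (MS s t))" for i y t
    by (intro lin_map_eqI_ebas lin_map_compose[OF lin_map_tmult_left lin_map_tens_right]
        lin_map_compose[OF lin_map_tens_right S1]) (auto dest: fun_cong)
  then have "(\<lambda>x. tmult MA MS (tens x s) (tens y t)) = (\<lambda>x. tens (MA x y) (MS s t))"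
    by (intro lin_map_eqI_ebas lin_map_compose[OF lin_map_tmult_left lin_map_tens_left]
        lin_map_compose[OF lin_map_tens_left A1]) (auto dest: fun_cong)
  then show ?thesis by (rule fun_cong)
qed

lemma pred_mult_add_mod_eq_0_iff:
  fixes m c c' :: nat
  assumes "0 < m" "c < m" "c' < m"
  shows "((m - 1) * c + c') mod m = 0 \<longleftrightarrow> c = c'"
proof -
  have e: "(m - 1) * c + c' + c = m * c + c'" using assms(1)
    by (cases m) (auto simp: algebra_simps)
  show ?thesis
  proof
    assume "((m - 1) * c + c') mod m = 0"
    then have "((m - 1) * c + c' + c) mod m = c mod m"
      by (metis add.commute add_0 mod_add_left_eq)
    then have "c' mod m = c mod m" by (simp only: e) simp
    then show "c = c'" using assms by simp
  next
    assume "c = c'"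
    then have "(m - 1) * c + c' = m * c" using e by simp
    then show "((m - 1) * c + c') mod m = 0" by simp
  qed
qed

lemma add_mod_add_diff_mod:
  fixes m a b j :: nat
  assumes "b < m"
  shows "(((a + b) mod m + j) mod m + m - b) mod m = (a + j) mod m"
proof -
  have "(((a + b) mod m + j) mod m + m - b) mod m = (((a + b) mod m + j) mod m + (m - b)) mod m"
    using assms by simp
  also have "\<dots> = ((a + b) + j + (m - b)) mod m"
    by (metis mod_add_left_eq)
  also have "(a + b) + j + (m - b) = (a + j) + m" using assms by simp
  finally show ?thesis by simp
qed

lemma add_mod_eq_iff:
  fixes m a b c :: nat
  assumes "a < m" "b < m" "c < m"
  shows "(a + b) mod m = c \<longleftrightarrow> a = (c + m - b) mod m"
proof
  assume "(a + b) mod m = c"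
  then show "a = (c + m - b) mod m"
    using add_mod_add_diff_mod[OF assms(2), of a 0] assms by simp
next
  assume h: "a = (c + m - b) mod m"
  have "((c + m - b) mod m + b) mod m = (c + m - b + b) mod m" by (simp add: mod_add_left_eq)
  also have "c + m - b + b = c + m" using assms by simp
  finally show "(a + b) mod m = c" using h assms by simp
qed

lemma bij_betw_add_mod: "0 < m \<Longrightarrow> bij_betw (\<lambda>j. (c + j) mod (m::nat)) {..<m} {..<m}"
proof -
  assume m: "0 < m"
  have inj: "inj_on (\<lambda>j. (c + j) mod m) {..<m}"
  proof (rule inj_onI)
    fix x y assume "x \<in> {..<m}" "y \<in> {..<m}" "(c + x) mod m = (c + y) mod m"
    then show "x = y"
    proof (induction x y rule: linorder_wlog)
      case (le a b)
      then have "m dvd (c + b) - (c + a)" by (metis mod_eq_dvd_iff_nat add_le_mono1 add.commute)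
      then have "m dvd b - a" by simp
      moreover have "b - a < m" using le by auto
      ultimately show ?case using le by (metis dvd_imp_le diff_is_0_eq le_antisym neq0_conv not_le)
    next
      case (sym a b)
      then show ?case by metis
    qed
  qed
  moreover have "(\<lambda>j. (c + j) mod m) ` {..<m} = {..<m}"
    by (rule endo_inj_surj) (use inj m in auto)
  ultimately show ?thesis by (simp add: bij_betw_def)
qed

lemma sum_add_mod: "0 < m \<Longrightarrow> (\<Sum>j<m. f ((c + j) mod m)) = (\<Sum>j<(m::nat). f j)"
  using sum.reindex_bij_betw[OF bij_betw_add_mod[of m c], of f] by simp

subsection \<open>The grading induced by an automorphism of period \<open>m\<close>\<close>

locale period_grading =
  fixes m :: nat and \<omega> :: "'k::field" and \<sigma> :: "('a,'k) op"
  assumes m_pos: "0 < m" and root: "\<omega> ^ m = 1"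
    and primitive: "\<forall>i. 0 < i \<and> i < m \<longrightarrow> \<omega> ^ i \<noteq> 1"
    and lin_map_sigma: "lin_map \<sigma>" and period: "\<sigma> ^^ m = id"
begin

lemma omega_power_mod: "\<omega> ^ n = \<omega> ^ (n mod m)"
proof -
  have "\<omega> ^ n = \<omega> ^ (m * (n div m)) * \<omega> ^ (n mod m)" by (simp add: power_add[symmetric])
  also have "\<omega> ^ (m * (n div m)) = 1" by (simp add: power_mult root)
  finally show ?thesis by simp
qed

lemma omega_power_eq_1_iff: "\<omega> ^ n = 1 \<longleftrightarrow> n mod m = 0"
  using primitive m_pos omega_power_mod[of n] by (metis mod_less_divisor neq0_conv power_0)

text \<open>A primitive \<open>m\<close>-th root of unity forces the characteristic not to divide \<open>m\<close>:
  if \<open>m = p q\<close> with \<open>p\<close> the characteristic, then \<open>(\<omega>\<^sup>q - 1)\<^sup>p = \<omega>\<^sup>m - 1 = 0\<close>.\<close>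
lemma of_nat_m_neq_0: "of_nat m \<noteq> (0::'k)"
proof
  assume h: "of_nat m = (0::'k)"
  define p where "p = CHAR('k)"
  define q where "q = m div p"
  have "CHAR('k) > 0" using h m_pos CHAR_pos_iff by blast
  then have pr: "prime p" unfolding p_def by (rule prime_CHAR_semidom)
  have pq: "m = p * q" using h by (simp add: p_def q_def of_nat_eq_0_iff_char_dvd)
  have q0: "0 < q" using pq m_pos by (cases q) auto
  have qm: "q < m" using pq prime_gt_1_nat[OF pr] q0 by simp
  have "(\<omega> ^ q + (- 1)) ^ p = (\<omega> ^ q) ^ p + (- 1) ^ p"
    by (rule freshmans_dream) (use pr p_def in auto)
  also have "(- 1 :: 'k) ^ p = - (1 ^ p)"
    by (rule minus_power_prime_CHAR) (use pr p_def in auto)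
  also have "(\<omega> ^ q) ^ p = 1" using root pq by (simp add: power_mult[symmetric] mult.commute)
  finally have "(\<omega> ^ q - 1) ^ p = 0" by simp
  then have "\<omega> ^ q = 1" by simp
  then show False using primitive q0 qm by blast
qed

lemma sum_omega_powers: "(\<Sum>l<m. (\<omega> ^ e) ^ l) = (if e mod m = 0 then of_nat m else 0)"
proof (cases "e mod m = 0")
  case True
  then have "\<omega> ^ e = 1" using omega_power_eq_1_iff by simp
  then show ?thesis using True by simp
next
  case False
  then have ne: "\<omega> ^ e \<noteq> 1" using omega_power_eq_1_iff by simp
  have "(\<omega> ^ e) ^ m = 1" by (simp add: power_mult[symmetric] mult.commute[of e] power_mult root)
  then have "(\<omega> ^ e - 1) * (\<Sum>l<m. (\<omega> ^ e) ^ l) = 0"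
    by (simp add: power_diff_1_eq[of "\<omega> ^ e" m, symmetric])
  then show ?thesis using ne False by simp
qed

abbreviation V :: "nat \<Rightarrow> ('a,'k) vec set" where "V c \<equiv> eigsp \<omega> \<sigma> c"

lemma V_iff: "x \<in> V c \<longleftrightarrow> \<sigma> x = sc (\<omega> ^ c) x"
  by (simp add: eigsp_def)

lemma V_mod: "V (c mod m) = V c"
  by (auto simp: eigsp_def omega_power_mod[of c])

lemma V_add: "x \<in> V c \<Longrightarrow> y \<in> V c \<Longrightarrow> x + y \<in> V c"
  by (simp add: V_iff lin_map_add[OF lin_map_sigma] sc_add_right)

lemma V_sc: "x \<in> V c \<Longrightarrow> sc r x \<in> V c"
  by (simp add: V_iff lin_map_sc[OF lin_map_sigma] mult.commute)

lemma V_sum: "(\<And>i. i \<in> A \<Longrightarrow> f i \<in> V c) \<Longrightarrow> sum f A \<in> V c"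
proof (induction A rule: infinite_finite_induct)
  case (infinite A)
  then show ?case by (simp add: V_iff lin_map_zero[OF lin_map_sigma])
next
  case empty
  then show ?case by (simp add: V_iff lin_map_zero[OF lin_map_sigma])
qed (auto intro: V_add)

lemma funpow_V: "x \<in> V c \<Longrightarrow> (\<sigma> ^^ l) x = sc (\<omega> ^ (c * l)) x"
  by (induction l) (simp_all add: lin_map_sc[OF lin_map_sigma] V_iff power_add mult.commute)

text \<open>As \<open>\<omega> ^ ((m - 1) * c)\<close> is the inverse of \<open>\<omega> ^ c\<close>, this is the averaging projection
  onto the eigenspace \<open>V c\<close>.\<close>
definition eig_proj :: "nat \<Rightarrow> ('a,'k) op" where
  "eig_proj c x = sc (inverse (of_nat m)) (\<Sum>l<m. sc (\<omega> ^ ((m - 1) * c * l)) ((\<sigma> ^^ l) x))"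

lemma lin_map_eig_proj: "lin_map (eig_proj c)"
  unfolding eig_proj_def[abs_def]
  by (intro lin_map_scale lin_map_sum_fun lin_map_funpow[OF lin_map_sigma])

lemma eig_proj_in_V: "eig_proj c x \<in> V c"
proof -
  define F where "F l = sc (\<omega> ^ c * \<omega> ^ ((m - 1) * c * l)) ((\<sigma> ^^ l) x)" for l
  have shift: "\<omega> ^ ((m - 1) * c * l) = \<omega> ^ c * \<omega> ^ ((m - 1) * c * Suc l)" for l
  proof -
    have g: "c + k * c * Suc l = k * c * l + Suc k * c" for k by (simp add: algebra_simps)
    have "Suc (m - 1) = m" using m_pos by simp
    then have E: "c + (m - 1) * c * Suc l = (m - 1) * c * l + m * c" using g[of "m - 1"] by simp
    have "\<omega> ^ c * \<omega> ^ ((m - 1) * c * Suc l) = \<omega> ^ (c + (m - 1) * c * Suc l)" by (rule power_add[symmetric])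
    also have "\<dots> = \<omega> ^ ((m - 1) * c * l + m * c)" by (simp only: E)
    also have "\<dots> = \<omega> ^ ((m - 1) * c * l) * (\<omega> ^ m) ^ c" by (simp only: power_add power_mult)
    finally show ?thesis by (simp add: root)
  qed
  have Fm: "F m = F 0"
  proof -
    have "\<omega> ^ ((m - 1) * c * m) = 1" by (simp add: mult.commute[of _ m] power_mult root)
    then show ?thesis by (simp add: F_def period)
  qed
  have "(\<Sum>l<m. sc (\<omega> ^ ((m - 1) * c * l)) ((\<sigma> ^^ Suc l) x)) = (\<Sum>l<m. F (Suc l))"
    unfolding F_def by (subst shift) (rule refl)
  also have "\<dots> = (\<Sum>l<m. F l)"
    using sum.lessThan_Suc_shift[of F m] Fm by (simp add: add.commute)
  also have "\<dots> = sc (\<omega> ^ c) (\<Sum>l<m. sc (\<omega> ^ ((m - 1) * c * l)) ((\<sigma> ^^ l) x))"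
    by (simp add: F_def sc_sum_right)
  finally have *: "(\<Sum>l<m. sc (\<omega> ^ ((m - 1) * c * l)) ((\<sigma> ^^ Suc l) x))
      = sc (\<omega> ^ c) (\<Sum>l<m. sc (\<omega> ^ ((m - 1) * c * l)) ((\<sigma> ^^ l) x))" .
  have "\<sigma> (eig_proj c x) = sc (inverse (of_nat m)) (\<Sum>l<m. sc (\<omega> ^ ((m - 1) * c * l)) ((\<sigma> ^^ Suc l) x))"
    by (simp add: eig_proj_def lin_map_sc[OF lin_map_sigma] lin_map_sum[OF lin_map_sigma])
  also have "\<dots> = sc (\<omega> ^ c) (eig_proj c x)"
    unfolding * eig_proj_def by (simp add: mult.commute)
  finally show ?thesis by (simp add: V_iff)
qed

lemma eig_proj_V:
  assumes "x \<in> V c'" "c < m" "c' < m"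
  shows "eig_proj c x = (if c = c' then x else 0)"
proof -
  have pw: "(\<omega> ^ ((m - 1) * c + c')) ^ l = \<omega> ^ ((m - 1) * c * l) * \<omega> ^ (c' * l)" for l
  proof -
    have "(\<omega> ^ ((m - 1) * c + c')) ^ l = \<omega> ^ (((m - 1) * c + c') * l)" by (rule power_mult[symmetric])
    also have "\<dots> = \<omega> ^ ((m - 1) * c * l + c' * l)" by (simp only: add_mult_distrib)
    also have "\<dots> = \<omega> ^ ((m - 1) * c * l) * \<omega> ^ (c' * l)" by (rule power_add)
    finally show ?thesis .
  qed
  have "eig_proj c x = sc (inverse (of_nat m)) (\<Sum>l<m. sc ((\<omega> ^ ((m - 1) * c + c')) ^ l) x)"
    unfolding eig_proj_def pw by (simp add: funpow_V[OF assms(1)] mult.commute)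
  also have "\<dots> = sc (inverse (of_nat m) * (\<Sum>l<m. (\<omega> ^ ((m - 1) * c + c')) ^ l)) x"
    by (simp add: sc_sum_left[symmetric])
  also have "\<dots> = (if c = c' then x else 0)"
    using pred_mult_add_mod_eq_0_iff[OF m_pos assms(2,3)] by (simp add: sum_omega_powers of_nat_m_neq_0)
  finally show ?thesis .
qed

lemma sum_eig_proj: "(\<Sum>c<m. eig_proj c x) = x"
proof -
  have "(\<Sum>c<m. eig_proj c x) = sc (inverse (of_nat m)) (\<Sum>c<m. \<Sum>l<m. sc (\<omega> ^ ((m - 1) * c * l)) ((\<sigma> ^^ l) x))"
    by (simp add: eig_proj_def sc_sum_right)
  also have "\<dots> = sc (inverse (of_nat m)) (\<Sum>l<m. \<Sum>c<m. sc (\<omega> ^ ((m - 1) * c * l)) ((\<sigma> ^^ l) x))"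
    by (subst sum.swap) (rule refl)
  also have "\<dots> = sc (inverse (of_nat m)) (\<Sum>l<m. sc (\<Sum>c<m. (\<omega> ^ ((m - 1) * l)) ^ c) ((\<sigma> ^^ l) x))"
  proof -
    have "\<omega> ^ ((m - 1) * c * l) = (\<omega> ^ ((m - 1) * l)) ^ c" for c l
      by (simp add: power_mult[symmetric] mult.commute mult.left_commute)
    then show ?thesis by (simp add: sc_sum_left)
  qed
  also have "\<dots> = sc (inverse (of_nat m)) (\<Sum>l<m. if l = 0 then sc (of_nat m) x else 0)"
  proof -
    have "(\<Sum>c<m. (\<omega> ^ ((m - 1) * l)) ^ c) = (if l = 0 then of_nat m else 0)" if "l < m" for l
      using pred_mult_add_mod_eq_0_iff[OF m_pos that, of 0] that m_pos by (simp add: sum_omega_powers)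
    then show ?thesis by (intro arg_cong[where f = "sc _"] sum.cong) auto
  qed
  also have "\<dots> = x" using m_pos of_nat_m_neq_0 by simp
  finally show ?thesis .
qed

lemma lin_map_eq_sum_eig_proj: "lin_map f \<Longrightarrow> f x = (\<Sum>c<m. f (eig_proj c x))"
  by (metis lin_map_sum sum_eig_proj)

lemma bilinear_eqI_V:
  fixes \<Phi> \<Psi> :: "('a,'k) vec \<Rightarrow> ('a,'k) vec \<Rightarrow> ('c,'k) vec"
  assumes "\<And>v. lin_map (\<lambda>u. \<Phi> u v)" "\<And>u. lin_map (\<Phi> u)"
    and "\<And>v. lin_map (\<lambda>u. \<Psi> u v)" "\<And>u. lin_map (\<Psi> u)"
    and "\<And>a b x y. a < m \<Longrightarrow> b < m \<Longrightarrow> x \<in> V a \<Longrightarrow> y \<in> V b \<Longrightarrow> \<Phi> x y = \<Psi> x y"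
  shows "\<Phi> u v = \<Psi> u v"
proof -
  have "\<Phi> u v = (\<Sum>a<m. \<Phi> (eig_proj a u) v)" by (rule lin_map_eq_sum_eig_proj[OF assms(1)])
  also have "\<dots> = (\<Sum>a<m. \<Sum>b<m. \<Phi> (eig_proj a u) (eig_proj b v))"
    by (rule sum.cong[OF refl], rule lin_map_eq_sum_eig_proj[OF assms(2)])
  also have "\<dots> = (\<Sum>a<m. \<Sum>b<m. \<Psi> (eig_proj a u) (eig_proj b v))"
    by (intro sum.cong refl assms(5)[OF _ _ eig_proj_in_V eig_proj_in_V]) auto
  also have "\<dots> = (\<Sum>a<m. \<Psi> (eig_proj a u) v)"
    by (rule sum.cong[OF refl], rule lin_map_eq_sum_eig_proj[OF assms(4), symmetric])
  also have "\<dots> = \<Psi> u v" by (rule lin_map_eq_sum_eig_proj[OF assms(3), symmetric])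
  finally show ?thesis .
qed

lemma End_deg_iff: "T \<in> End_deg m \<omega> \<sigma> j \<longleftrightarrow> lin_map T \<and> (\<forall>c<m. \<forall>x\<in>V c. T x \<in> V ((j + c) mod m))"
  by (simp add: End_deg_def lin_iff_lin_map add.commute)

lemma End_deg_lin_map: "T \<in> End_deg m \<omega> \<sigma> j \<Longrightarrow> lin_map T"
  by (simp add: End_deg_iff)

lemma End_deg_V: "T \<in> End_deg m \<omega> \<sigma> j \<Longrightarrow> x \<in> V c \<Longrightarrow> c < m \<Longrightarrow> T x \<in> V ((j + c) mod m)"
  by (simp add: End_deg_iff)

lemma End_deg_0: "(\<lambda>x. 0) \<in> End_deg m \<omega> \<sigma> j"
  using V_sum[of "{}"] by (simp add: End_deg_iff)

lemma End_deg_add: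
  "S \<in> End_deg m \<omega> \<sigma> j \<Longrightarrow> T \<in> End_deg m \<omega> \<sigma> j \<Longrightarrow> (\<lambda>x. S x + T x) \<in> End_deg m \<omega> \<sigma> j"
  unfolding End_deg_iff by (auto intro: lin_map_plus V_add)

lemma End_deg_scale: "T \<in> End_deg m \<omega> \<sigma> j \<Longrightarrow> (\<lambda>x. sc r (T x)) \<in> End_deg m \<omega> \<sigma> j"
  unfolding End_deg_iff by (auto intro: lin_map_scale V_sc)

lemma End_deg_sum:
  "(\<And>i. i \<in> A \<Longrightarrow> T i \<in> End_deg m \<omega> \<sigma> j) \<Longrightarrow> (\<lambda>x. \<Sum>i\<in>A. T i x) \<in> End_deg m \<omega> \<sigma> j"
  unfolding End_deg_iff by (auto intro!: lin_map_sum_fun V_sum)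

lemma End_deg_commute:
  assumes "T \<in> End_deg m \<omega> \<sigma> j"
  shows "\<sigma> (T x) = sc (\<omega> ^ j) (T (\<sigma> x))"
proof -
  have lT: "lin_map T" using End_deg_lin_map[OF assms] .
  have "\<sigma> (T x) = (\<Sum>c<m. \<sigma> (T (eig_proj c x)))"
    by (subst lin_map_eq_sum_eig_proj[OF lT]) (simp add: lin_map_sum[OF lin_map_sigma])
  also have "\<dots> = (\<Sum>c<m. sc (\<omega> ^ j) (T (sc (\<omega> ^ c) (eig_proj c x))))"
  proof (rule sum.cong[OF refl])
    fix c assume "c \<in> {..<m}"
    then have "T (eig_proj c x) \<in> V (j + c)"
      using End_deg_V[OF assms eig_proj_in_V] V_mod by simp
    then show "\<sigma> (T (eig_proj c x)) = sc (\<omega> ^ j) (T (sc (\<omega> ^ c) (eig_proj c x)))"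
      by (simp add: V_iff lin_map_sc[OF lT] power_add)
  qed
  also have "\<dots> = sc (\<omega> ^ j) (T (\<sigma> x))"
    using eig_proj_in_V V_iff lin_map_eq_sum_eig_proj[OF lin_map_compose[OF lT lin_map_sigma], of x]
    by (simp add: sc_sum_right)
  finally show ?thesis .
qed

lemma End_degI_commute:
  assumes "lin_map T" "\<And>x. \<sigma> (T x) = sc (\<omega> ^ j) (T (\<sigma> x))"
  shows "T \<in> End_deg m \<omega> \<sigma> j"
  unfolding End_deg_iff
proof (intro conjI allI impI ballI)
  fix c x assume "x \<in> V c"
  then have "T x \<in> V (j + c)"
    by (simp add: assms(2) V_iff lin_map_sc[OF assms(1)] power_add)
  then show "T x \<in> V ((j + c) mod m)" using V_mod by simp
qed (rule assms(1))

text \<open>\<open>hcomp T j\<close> is the component of \<open>T\<close> in \<open>End(V)\<^sub>j\<close> for the grading induced by \<open>\<sigma>\<^sup>*\<close>.\<close>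
definition hcomp :: "('a,'k) op \<Rightarrow> nat \<Rightarrow> ('a,'k) op" where
  "hcomp T j x = (\<Sum>c<m. eig_proj ((c + j) mod m) (T (eig_proj c x)))"

lemma lin_map_hcomp: "lin_map T \<Longrightarrow> lin_map (hcomp T j)"
  unfolding hcomp_def[abs_def]
  by (rule lin_map_sum_fun, rule lin_map_compose[OF lin_map_eig_proj lin_map_compose[OF _ lin_map_eig_proj]])

lemma hcomp_V:
  assumes "lin_map T" "x \<in> V c" "c < m"
  shows "hcomp T j x = eig_proj ((c + j) mod m) (T x)"
proof -
  have "hcomp T j x = (\<Sum>c'<m. if c' = c then eig_proj ((c' + j) mod m) (T x) else 0)"
    unfolding hcomp_def
    by (intro sum.cong refl)
       (simp add: eig_proj_V[OF assms(2) _ assms(3)] lin_map_zero[OF assms(1)] lin_map_zero[OF lin_map_eig_proj])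
  then show ?thesis using assms by simp
qed

lemma hcomp_End_deg: "lin_map T \<Longrightarrow> hcomp T j \<in> End_deg m \<omega> \<sigma> j"
  unfolding End_deg_iff
  using lin_map_hcomp hcomp_V eig_proj_in_V by (simp add: add.commute)

lemma sum_hcomp: "lin_map T \<Longrightarrow> (\<Sum>j<m. hcomp T j x) = T x"
proof -
  assume lT: "lin_map T"
  have "(\<Sum>j<m. hcomp T j x) = (\<Sum>c<m. \<Sum>j<m. eig_proj ((c + j) mod m) (T (eig_proj c x)))"
    unfolding hcomp_def by (rule sum.swap)
  also have "\<dots> = (\<Sum>c<m. \<Sum>j<m. eig_proj j (T (eig_proj c x)))"
    by (simp add: sum_add_mod[OF m_pos, of "\<lambda>j. eig_proj j _"])
  also have "\<dots> = T x" by (simp add: sum_eig_proj lin_map_eq_sum_eig_proj[OF lT, symmetric])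
  finally show ?thesis .
qed

lemma hcomp_expand: "lin_map T \<Longrightarrow> T = (\<lambda>x. \<Sum>j<m. hcomp T j x)"
  by (rule ext) (simp add: sum_hcomp)

lemma hcomp_sum: "hcomp (\<lambda>x. \<Sum>i\<in>A. T i x) j x = (\<Sum>i\<in>A. hcomp (T i) j x)"
  unfolding hcomp_def by (simp add: lin_map_sum[OF lin_map_eig_proj] sum.swap[of _ A])

lemma hcomp_add: "hcomp (\<lambda>x. S x + T x) j x = hcomp S j x + hcomp T j x"
  unfolding hcomp_def by (simp add: lin_map_add[OF lin_map_eig_proj] sum.distrib)

lemma hcomp_End_deg_eq:
  assumes T: "T \<in> End_deg m \<omega> \<sigma> i" and "i < m" "j < m"
  shows "hcomp T j x = (if i = j then T x else 0)"
proof -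
  have "hcomp T j x = (\<Sum>c<m. if i = j then T (eig_proj c x) else 0)"
    unfolding hcomp_def
  proof (rule sum.cong[OF refl])
    fix c assume c: "c \<in> {..<m}"
    have "inj_on (\<lambda>j. (c + j) mod m) {..<m}"
      using bij_betw_add_mod[OF m_pos] by (rule bij_betw_imp_inj_on)
    then have iff: "(c + j) mod m = (c + i) mod m \<longleftrightarrow> i = j"
      using c assms(2,3) by (auto dest: inj_onD)
    have "T (eig_proj c x) \<in> V ((i + c) mod m)"
      using End_deg_V[OF T eig_proj_in_V] c by simp
    then have "eig_proj ((c + j) mod m) (T (eig_proj c x))
        = (if (c + j) mod m = (i + c) mod m then T (eig_proj c x) else 0)"
      by (rule eig_proj_V) (simp_all add: m_pos)
    then show "eig_proj ((c + j) mod m) (T (eig_proj c x)) = (if i = j then T (eig_proj c x) else 0)"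
      by (simp only: iff add.commute[of i c])
  qed
  also have "\<dots> = (if i = j then T x else 0)"
    using lin_map_eq_sum_eig_proj[OF End_deg_lin_map[OF T], of x] by (cases "i = j") simp_all
  finally show ?thesis .
qed

lemma hcomp_self: "T \<in> End_deg m \<omega> \<sigma> j \<Longrightarrow> j < m \<Longrightarrow> hcomp T j = T"
  by (rule ext) (simp add: hcomp_End_deg_eq)

text \<open>Here \<open>(j + m - k) mod m\<close> is \<open>j - k\<close> in \<open>\<int>\<^sub>m\<close>.\<close>
lemma hcomp_double_sum:
  assumes Z: "\<And>k l. k < m \<Longrightarrow> l < m \<Longrightarrow> Z k l \<in> End_deg m \<omega> \<sigma> ((k + l) mod m)" and j: "j < m"
  shows "hcomp (\<lambda>u. \<Sum>k<m. \<Sum>l<m. Z k l u) j = (\<lambda>u. \<Sum>k<m. Z k ((j + m - k) mod m) u)"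
proof
  fix u
  have "hcomp (\<lambda>u. \<Sum>k<m. \<Sum>l<m. Z k l u) j u
      = (\<Sum>k<m. \<Sum>l<m. if l = (j + m - k) mod m then Z k l u else 0)"
    unfolding hcomp_sum
  proof (intro sum.cong refl)
    fix k l assume k: "k \<in> {..<m}" and l: "l \<in> {..<m}"
    have "(k + l) mod m = j \<longleftrightarrow> l = (j + m - k) mod m"
      using add_mod_eq_iff[of l m k j] k l j by (simp add: add.commute)
    moreover have "hcomp (Z k l) j u = (if (k + l) mod m = j then Z k l u else 0)"
      using k l by (intro hcomp_End_deg_eq Z j) simp_all
    ultimately show "hcomp (Z k l) j u = (if l = (j + m - k) mod m then Z k l u else 0)"
      by simp
  qed
  also have "\<dots> = (\<Sum>k<m. Z k ((j + m - k) mod m) u)"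
    using m_pos by simp
  finally show "hcomp (\<lambda>u. \<Sum>k<m. \<Sum>l<m. Z k l u) j u = (\<Sum>k<m. Z k ((j + m - k) mod m) u)" .
qed

end

lemma derivation_0: "bilin M \<Longrightarrow> (\<lambda>x. 0) \<in> derivations M"
  by (simp add: derivations_def lin_iff_lin_map lin_map_zero[OF bilin_lin_map_left]
      lin_map_zero[OF bilin_lin_map_right])

lemma derivation_add:
  "bilin M \<Longrightarrow> d \<in> derivations M \<Longrightarrow> d' \<in> derivations M \<Longrightarrow> (\<lambda>x. d x + d' x) \<in> derivations M"
  by (simp add: derivations_def lin_iff_lin_map lin_map_plus lin_map_add[OF bilin_lin_map_left]
      lin_map_add[OF bilin_lin_map_right] algebra_simps)

lemma derivation_diff:
  "bilin M \<Longrightarrow> d \<in> derivations M \<Longrightarrow> d' \<in> derivations M \<Longrightarrow> (\<lambda>x. d x - d' x) \<in> derivations M"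
  by (simp add: derivations_def lin_iff_lin_map lin_map_minus lin_map_diff[OF bilin_lin_map_left]
      lin_map_diff[OF bilin_lin_map_right] algebra_simps)

lemma derivation_scale: "bilin M \<Longrightarrow> d \<in> derivations M \<Longrightarrow> (\<lambda>x. sc r (d x)) \<in> derivations M"
  by (simp add: derivations_def lin_iff_lin_map lin_map_scale sc_add_right
      lin_map_sc[OF bilin_lin_map_left] lin_map_sc[OF bilin_lin_map_right])

lemma derivation_sum:
  assumes "bilin M" "\<And>i. i \<in> A \<Longrightarrow> d i \<in> derivations M"
  shows "(\<lambda>x. \<Sum>i\<in>A. d i x) \<in> derivations M"
  using assms(2)
proof (induction A rule: infinite_finite_induct)
  case (insert a A)
  then show ?case using derivation_add[OF assms(1), of "d a" "\<lambda>x. \<Sum>i\<in>A. d i x"] by simp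
qed (simp_all add: derivation_0[OF assms(1)])

lemma commutator_in_centroid:
  assumes B: "bilin M" and D: "D \<in> derivations M" and C: "C \<in> centroid M"
  shows "(\<lambda>u. D (C u) - C (D u)) \<in> centroid M"
proof -
  have lD: "lin_map D" and lC: "lin_map C"
    using D C by (auto simp: derivation_lin_map centroid_lin_map)
  have d: "D (M x y) = M (D x) y + M x (D y)" for x y using D by (simp add: derivations_def)
  have c1: "C (M x y) = M (C x) y" and c2: "C (M x y) = M x (C y)" for x y
    using C unfolding centroid_def by blast+
  have "D (C (M x y)) - C (D (M x y)) = M (D (C x) - C (D x)) y" for x y
    by (simp add: c1 d lin_map_add[OF lC] c2[of x "D y"] lin_map_diff[OF bilin_lin_map_left[OF B]])
  moreover have "D (C (M x y)) - C (D (M x y)) = M x (D (C y) - C (D y))" for x y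
    by (simp add: c2 d lin_map_add[OF lC] c1[of "D x" y] lin_map_diff[OF bilin_lin_map_right[OF B]])
  ultimately show ?thesis
    by (simp add: centroid_def lin_iff_lin_map lin_map_minus lin_map_compose lD lC)
qed

lemma perfect_lin_map_eq_0:
  assumes "perfect M" "lin_map \<Phi>" "\<And>x y. \<Phi> (M x y) = 0"
  shows "\<Phi> z = 0"
proof -
  obtain ps where "z = (\<Sum>(x, y)\<leftarrow>ps. M x y)" using assms(1) perfect_def by blast
  then have "\<Phi> z = sum_list (map \<Phi> (map (\<lambda>(x, y). M x y) ps))"
    by (simp add: lin_map_sum_list[OF assms(2)])
  also have "\<dots> = 0" by (induction ps) (auto simp: assms(3))
  finally show ?thesis .
qed

subsection \<open>Summable families of operators\<close>

lemma opsum_eq_sum: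
  "finite G \<Longrightarrow> (\<And>i. i \<notin> G \<Longrightarrow> F i u = 0) \<Longrightarrow> opsum F u = (\<Sum>i\<in>G. F i u)"
  unfolding opsum_def by (rule sum.mono_neutral_left) auto

lemma lin_map_opsum:
  assumes S: "summable_fam F" and L: "\<And>i. lin_map (F i)"
  shows "lin_map (opsum F)"
proof -
  have "opsum F (u + v) = opsum F u + opsum F v" for u v
  proof -
    let ?G = "{i. F i u \<noteq> 0} \<union> {i. F i v \<noteq> 0} \<union> {i. F i (u + v) \<noteq> 0}"
    have "finite ?G" using S by (simp add: summable_fam_def)
    then show ?thesis
      by (subst (1 2 3) opsum_eq_sum[of ?G]) (auto simp: lin_map_add[OF L] sum.distrib)
  qed
  moreover have "opsum F (sc r u) = sc r (opsum F u)" for r u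
  proof -
    let ?G = "{i. F i u \<noteq> 0} \<union> {i. F i (sc r u) \<noteq> 0}"
    have "finite ?G" using S by (simp add: summable_fam_def)
    then show ?thesis
      by (subst (1 2) opsum_eq_sum[of ?G]) (auto simp: lin_map_sc[OF L] sc_sum_right)
  qed
  ultimately show ?thesis by (simp add: lin_map_def)
qed

lemma opsum_derivation:
  assumes S: "summable_fam F" and D: "\<And>i. F i \<in> derivations M" and B: "bilin M"
  shows "opsum F \<in> derivations M"
proof -
  have "opsum F (M x y) = M (opsum F x) y + M x (opsum F y)" for x y
  proof -
    let ?G = "{i. F i x \<noteq> 0} \<union> {i. F i y \<noteq> 0} \<union> {i. F i (M x y) \<noteq> 0}"
    have f: "finite ?G" using S by (simp add: summable_fam_def)
    have "opsum F (M x y) = (\<Sum>i\<in>?G. M (F i x) y + M x (F i y))"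
      by (subst opsum_eq_sum[OF f]) (use D in \<open>auto simp: derivations_def\<close>)
    also have "\<dots> = M (\<Sum>i\<in>?G. F i x) y + M x (\<Sum>i\<in>?G. F i y)"
      by (simp add: sum.distrib lin_map_sum[OF bilin_lin_map_left[OF B]] lin_map_sum[OF bilin_lin_map_right[OF B]])
    also have "\<dots> = M (opsum F x) y + M x (opsum F y)"
      by (subst (1 2) opsum_eq_sum[OF f]) auto
    finally show ?thesis .
  qed
  then show ?thesis
    using lin_map_opsum[OF S derivation_lin_map[OF D]] by (simp add: derivations_def lin_iff_lin_map)
qed

lemma summable_optens_left:
  fixes f :: "'i \<Rightarrow> ('a,'k::field) op" and g :: "'i \<Rightarrow> ('b,'k) op"
  assumes "summable_fam f"
  shows "summable_fam (\<lambda>i. optens (f i) (g i))"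
  unfolding summable_fam_def
proof
  fix u :: "('a \<times> 'b, 'k) vec"
  have "{i. optens (f i) (g i) u \<noteq> 0} \<subseteq> (\<Union>q\<in>Poly_Mapping.keys u. {i. f i (ebas (fst q)) \<noteq> 0})"
  proof
    fix i assume "i \<in> {i. optens (f i) (g i) u \<noteq> 0}"
    then have nz: "optens (f i) (g i) u \<noteq> 0" by simp
    show "i \<in> (\<Union>q\<in>Poly_Mapping.keys u. {i. f i (ebas (fst q)) \<noteq> 0})"
    proof (rule ccontr)
      assume "i \<notin> (\<Union>q\<in>Poly_Mapping.keys u. {i. f i (ebas (fst q)) \<noteq> 0})"
      then have "optens (f i) (g i) u = 0" by (intro optens_eq_0) auto
      with nz show False by contradiction
    qed
  qed
  moreover have "finite (\<Union>q\<in>Poly_Mapping.keys u. {i. f i (ebas (fst q)) \<noteq> 0})"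
    using assms by (simp add: summable_fam_def)
  ultimately show "finite {i. optens (f i) (g i) u \<noteq> 0}" by (rule finite_subset)
qed

lemma summable_optens_right:
  fixes f :: "'i \<Rightarrow> ('a,'k::field) op" and g :: "'i \<Rightarrow> ('b,'k) op"
  assumes "summable_fam g"
  shows "summable_fam (\<lambda>i. optens (f i) (g i))"
  unfolding summable_fam_def
proof
  fix u :: "('a \<times> 'b, 'k) vec"
  have "{i. optens (f i) (g i) u \<noteq> 0} \<subseteq> (\<Union>q\<in>Poly_Mapping.keys u. {i. g i (ebas (snd q)) \<noteq> 0})"
  proof
    fix i assume "i \<in> {i. optens (f i) (g i) u \<noteq> 0}"
    then have nz: "optens (f i) (g i) u \<noteq> 0" by simp
    show "i \<in> (\<Union>q\<in>Poly_Mapping.keys u. {i. g i (ebas (snd q)) \<noteq> 0})"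
    proof (rule ccontr)
      assume "i \<notin> (\<Union>q\<in>Poly_Mapping.keys u. {i. g i (ebas (snd q)) \<noteq> 0})"
      then have "optens (f i) (g i) u = 0" by (intro optens_eq_0) auto
      with nz show False by contradiction
    qed
  qed
  moreover have "finite (\<Union>q\<in>Poly_Mapping.keys u. {i. g i (ebas (snd q)) \<noteq> 0})"
    using assms by (simp add: summable_fam_def)
  ultimately show "finite {i. optens (f i) (g i) u \<noteq> 0}" by (rule finite_subset)
qed

lemma opsum_sum:
  assumes fA: "finite A" and S: "\<And>k. k \<in> A \<Longrightarrow> summable_fam (H k)"
  shows "opsum (\<lambda>i x. \<Sum>k\<in>A. H k i x) u = (\<Sum>k\<in>A. opsum (H k) u)"
proof -
  let ?G = "\<Union>k\<in>A. {i. H k i u \<noteq> 0}"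
  have fG: "finite ?G" using fA S by (auto simp: summable_fam_def)
  have "opsum (\<lambda>i x. \<Sum>k\<in>A. H k i x) u = (\<Sum>i\<in>?G. \<Sum>k\<in>A. H k i u)"
    by (rule opsum_eq_sum[OF fG]) (auto intro: sum.neutral)
  also have "\<dots> = (\<Sum>k\<in>A. \<Sum>i\<in>?G. H k i u)" by (rule sum.swap)
  also have "\<dots> = (\<Sum>k\<in>A. opsum (H k) u)"
    by (rule sum.cong[OF refl], rule opsum_eq_sum[OF fG, symmetric]) auto
  finally show ?thesis .
qed

lemma opsum_optens_sums:
  fixes F :: "nat \<Rightarrow> 'i \<Rightarrow> ('a,'k::field) op" and G :: "nat \<Rightarrow> 'i \<Rightarrow> ('b,'k) op"
  assumes "\<And>k l. summable_fam (\<lambda>i. optens (F k i) (G l i))"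
  shows "opsum (\<lambda>i. optens (\<lambda>x. \<Sum>k<m. F k i x) (\<lambda>x. \<Sum>l<n. G l i x)) u
      = (\<Sum>k<m. \<Sum>l<n. opsum (\<lambda>i. optens (F k i) (G l i)) u)"
proof -
  let ?P = "{..<m} \<times> {..<n}"
  have "optens (\<lambda>x. \<Sum>k<m. F k i x) (\<lambda>x. \<Sum>l<n. G l i x)
      = (\<lambda>v. \<Sum>p\<in>?P. optens (F (fst p) i) (G (snd p) i) v)" for i
    by (rule ext) (simp add: optens_sum_left optens_sum_right sum.cartesian_product case_prod_beta)
  then have "opsum (\<lambda>i. optens (\<lambda>x. \<Sum>k<m. F k i x) (\<lambda>x. \<Sum>l<n. G l i x)) u
      = opsum (\<lambda>i v. \<Sum>p\<in>?P. optens (F (fst p) i) (G (snd p) i) v) u"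
    by simp
  also have "\<dots> = (\<Sum>p\<in>?P. opsum (\<lambda>i. optens (F (fst p) i) (G (snd p) i)) u)"
    by (rule opsum_sum) (simp_all add: assms)
  also have "\<dots> = (\<Sum>k<m. \<Sum>l<n. opsum (\<lambda>i. optens (F k i) (G l i)) u)"
    by (simp add: sum.cartesian_product case_prod_beta)
  finally show ?thesis .
qed

lemma
  fixes m :: nat
  assumes S: "\<And>k. k < m \<Longrightarrow> summable_fam (H k)" and Z: "\<And>k i. m \<le> k \<Longrightarrow> H k i = (\<lambda>x. 0)"
  shows summable_pairs: "summable_fam (\<lambda>p. H (fst p) (snd p))"
    and opsum_pairs: "opsum (\<lambda>p. H (fst p) (snd p)) u = (\<Sum>k<m. opsum (H k) u)"
proof -
  have supp: "{p. H (fst p) (snd p) u \<noteq> 0} = Sigma {..<m} (\<lambda>k. {i. H k i u \<noteq> 0})" for u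
  proof (intro set_eqI iffI)
    fix p assume "p \<in> {p. H (fst p) (snd p) u \<noteq> 0}"
    then have h: "H (fst p) (snd p) u \<noteq> 0" by simp
    have "fst p < m"
    proof (rule ccontr)
      assume "\<not> fst p < m"
      then have "H (fst p) (snd p) = (\<lambda>x. 0)" by (intro Z) simp
      with h show False by simp
    qed
    with h show "p \<in> Sigma {..<m} (\<lambda>k. {i. H k i u \<noteq> 0})" by (cases p) auto
  qed auto
  have fin: "finite (Sigma {..<m} (\<lambda>k. {i. H k i u \<noteq> 0}))" for u
    using S by (intro finite_SigmaI) (auto simp: summable_fam_def)
  show "summable_fam (\<lambda>p. H (fst p) (snd p))"
    unfolding summable_fam_def supp using fin by blast
  have "opsum (\<lambda>p. H (fst p) (snd p)) u = (\<Sum>(k, i)\<in>Sigma {..<m} (\<lambda>k. {i. H k i u \<noteq> 0}). H k i u)"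
    unfolding opsum_def supp by (simp add: case_prod_beta)
  also have "\<dots> = (\<Sum>k<m. \<Sum>i\<in>{i. H k i u \<noteq> 0}. H k i u)"
    using S by (subst sum.Sigma) (auto simp: summable_fam_def)
  finally show "opsum (\<lambda>p. H (fst p) (snd p)) u = (\<Sum>k<m. opsum (H k) u)"
    by (simp add: opsum_def)
qed

context period_grading
begin

lemma End_deg_opsum:
  assumes S: "summable_fam F" and E: "\<And>i. F i \<in> End_deg m \<omega> \<sigma> j"
  shows "opsum F \<in> End_deg m \<omega> \<sigma> j"
  unfolding End_deg_iff
proof (intro conjI allI impI ballI)
  show "lin_map (opsum F)" by (rule lin_map_opsum[OF S]) (use E End_deg_lin_map in blast)
  fix c x assume "c < m" "x \<in> V c"
  then show "opsum F x \<in> V ((j + c) mod m)"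
    unfolding opsum_def by (intro V_sum) (use E End_deg_V in blast)
qed

lemma summable_hcomp:
  assumes S: "summable_fam F"
  shows "summable_fam (\<lambda>i. hcomp (F i) k)"
  unfolding summable_fam_def
proof
  fix x
  have "{i. hcomp (F i) k x \<noteq> 0} \<subseteq> (\<Union>c<m. {i. F i (eig_proj c x) \<noteq> 0})"
    by (auto simp: hcomp_def lin_map_zero[OF lin_map_eig_proj] intro: ccontr)
  moreover have "finite (\<Union>c<m. {i. F i (eig_proj c x) \<noteq> 0})"
    using S by (simp add: summable_fam_def)
  ultimately show "finite {i. hcomp (F i) k x \<noteq> 0}" by (rule finite_subset)
qed

end

locale graded_algebra = period_grading m \<omega> \<sigma> for m \<omega> and \<sigma> :: "('a,'k::field) op" +
  fixes M :: "('a,'k) prod"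
  assumes bilin: "bilin M" and sigma_mult: "\<And>x y. \<sigma> (M x y) = M (\<sigma> x) (\<sigma> y)"
begin

lemma lin_map_M_left: "lin_map (\<lambda>x. M x y)"
  by (rule bilin_lin_map_left[OF bilin])

lemma lin_map_M_right: "lin_map (M x)"
  by (rule bilin_lin_map_right[OF bilin])

lemma mult_V: "x \<in> V a \<Longrightarrow> y \<in> V b \<Longrightarrow> M x y \<in> V ((a + b) mod m)"
  unfolding V_mod
  by (simp add: V_iff sigma_mult lin_map_sc[OF lin_map_M_left] lin_map_sc[OF lin_map_M_right]
      power_add mult.commute)

lemma eig_proj_mult_right:
  assumes "y \<in> V b" "b < m" "c < m"
  shows "eig_proj c (M w y) = M (eig_proj ((c + m - b) mod m) w) y"
proof -
  have "eig_proj c (M w y) = (\<Sum>a<m. eig_proj c (M (eig_proj a w) y))"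
    by (rule lin_map_eq_sum_eig_proj[OF lin_map_compose[OF lin_map_eig_proj lin_map_M_left]])
  also have "\<dots> = (\<Sum>a<m. if a = (c + m - b) mod m then M (eig_proj a w) y else 0)"
  proof (rule sum.cong[OF refl])
    fix a assume a: "a \<in> {..<m}"
    have "M (eig_proj a w) y \<in> V ((a + b) mod m)" by (rule mult_V[OF eig_proj_in_V assms(1)])
    then have "eig_proj c (M (eig_proj a w) y) = (if c = (a + b) mod m then M (eig_proj a w) y else 0)"
      by (rule eig_proj_V[OF _ assms(3)]) (use m_pos in simp)
    then show "eig_proj c (M (eig_proj a w) y) = (if a = (c + m - b) mod m then M (eig_proj a w) y else 0)"
      using add_mod_eq_iff[of a m b c] a assms(2,3) by auto
  qed
  also have "\<dots> = M (eig_proj ((c + m - b) mod m) w) y" using m_pos by simp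
  finally show ?thesis .
qed

lemma eig_proj_mult_left:
  assumes "x \<in> V a" "a < m" "c < m"
  shows "eig_proj c (M x w) = M x (eig_proj ((c + m - a) mod m) w)"
proof -
  have "eig_proj c (M x w) = (\<Sum>b<m. eig_proj c (M x (eig_proj b w)))"
    by (rule lin_map_eq_sum_eig_proj[OF lin_map_compose[OF lin_map_eig_proj lin_map_M_right]])
  also have "\<dots> = (\<Sum>b<m. if b = (c + m - a) mod m then M x (eig_proj b w) else 0)"
  proof (rule sum.cong[OF refl])
    fix b assume b: "b \<in> {..<m}"
    have "M x (eig_proj b w) \<in> V ((a + b) mod m)" by (rule mult_V[OF assms(1) eig_proj_in_V])
    then have "eig_proj c (M x (eig_proj b w)) = (if c = (a + b) mod m then M x (eig_proj b w) else 0)"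
      by (rule eig_proj_V[OF _ assms(3)]) (use m_pos in simp)
    then show "eig_proj c (M x (eig_proj b w)) = (if b = (c + m - a) mod m then M x (eig_proj b w) else 0)"
      using add_mod_eq_iff[of b m a c] b assms(2,3) by (auto simp: add.commute)
  qed
  also have "\<dots> = M x (eig_proj ((c + m - a) mod m) w)" using m_pos by simp
  finally show ?thesis .
qed

text \<open>The projection to the degree of \<open>M x y\<close> moves onto whichever factor \<open>T\<close> acted on.\<close>
lemma hcomp_mult:
  assumes "lin_map T" "x \<in> V a" "y \<in> V b" "a < m" "b < m"
  shows "hcomp T j (M x y) = eig_proj (((a + b) mod m + j) mod m) (T (M x y))"
    and "eig_proj (((a + b) mod m + j) mod m) (M (T x) y) = M (hcomp T j x) y"
    and "eig_proj (((a + b) mod m + j) mod m) (M x (T y)) = M x (hcomp T j y)"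
proof -
  have C: "((a + b) mod m + j) mod m < m" using m_pos by simp
  show "hcomp T j (M x y) = eig_proj (((a + b) mod m + j) mod m) (T (M x y))"
    by (rule hcomp_V[OF assms(1) mult_V[OF assms(2,3)]]) (use m_pos in simp)
  show "eig_proj (((a + b) mod m + j) mod m) (M (T x) y) = M (hcomp T j x) y"
    by (simp add: eig_proj_mult_right[OF assms(3,5) C] add_mod_add_diff_mod[OF assms(5)]
        hcomp_V[OF assms(1,2,4)])
  show "eig_proj (((a + b) mod m + j) mod m) (M x (T y)) = M x (hcomp T j y)"
    using eig_proj_mult_left[OF assms(2,4) C] add_mod_add_diff_mod[OF assms(4), of b j]
    by (simp add: add.commute hcomp_V[OF assms(1,3,5)])
qed

lemma hcomp_derivation:
  assumes D: "D \<in> derivations M"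
  shows "hcomp D j \<in> derivations M"
proof -
  have lD: "lin_map D" using D by (rule derivation_lin_map)
  have lD': "lin_map (hcomp D j)" by (rule lin_map_hcomp[OF lD])
  have "hcomp D j (M u v) = M (hcomp D j u) v + M u (hcomp D j v)" for u v
  proof (rule bilinear_eqI_V[where \<Phi> = "\<lambda>u v. hcomp D j (M u v)"
        and \<Psi> = "\<lambda>u v. M (hcomp D j u) v + M u (hcomp D j v)"])
    show "lin_map (\<lambda>u. hcomp D j (M u v))" for v by (rule lin_map_compose[OF lD' lin_map_M_left])
    show "lin_map (\<lambda>v. hcomp D j (M u v))" for u by (rule lin_map_compose[OF lD' lin_map_M_right])
    show "lin_map (\<lambda>u. M (hcomp D j u) v + M u (hcomp D j v))" for v
      by (rule lin_map_plus[OF lin_map_compose[OF lin_map_M_left lD'] lin_map_M_left])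
    show "lin_map (\<lambda>v. M (hcomp D j u) v + M u (hcomp D j v))" for u
      by (rule lin_map_plus[OF lin_map_M_right lin_map_compose[OF lin_map_M_right lD']])
    fix a b x y assume "a < m" "b < m" "x \<in> V a" "y \<in> V b"
    note hm = hcomp_mult[OF lD \<open>x \<in> V a\<close> \<open>y \<in> V b\<close> \<open>a < m\<close> \<open>b < m\<close>]
    show "hcomp D j (M x y) = M (hcomp D j x) y + M x (hcomp D j y)"
      using D by (simp add: hm derivations_def lin_map_add[OF lin_map_eig_proj])
  qed
  then show ?thesis using lD' by (simp add: derivations_def lin_iff_lin_map)
qed

lemma hcomp_centroid:
  assumes G: "G \<in> centroid M"
  shows "hcomp G j \<in> centroid M"
proof -
  have lG: "lin_map G" using G by (rule centroid_lin_map)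
  have lG': "lin_map (hcomp G j)" by (rule lin_map_hcomp[OF lG])
  have G_mult: "G (M x y) = M (G x) y" "G (M x y) = M x (G y)" for x y
    using G unfolding centroid_def by blast+
  have "hcomp G j (M u v) = M (hcomp G j u) v" for u v
  proof (rule bilinear_eqI_V[where \<Phi> = "\<lambda>u v. hcomp G j (M u v)" and \<Psi> = "\<lambda>u v. M (hcomp G j u) v"])
    show "lin_map (\<lambda>u. hcomp G j (M u v))" for v by (rule lin_map_compose[OF lG' lin_map_M_left])
    show "lin_map (\<lambda>v. hcomp G j (M u v))" for u by (rule lin_map_compose[OF lG' lin_map_M_right])
    show "lin_map (\<lambda>u. M (hcomp G j u) v)" for v by (rule lin_map_compose[OF lin_map_M_left lG'])
    show "lin_map (\<lambda>v. M (hcomp G j u) v)" for u by (rule lin_map_M_right)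
    fix a b x y assume "a < m" "b < m" "x \<in> V a" "y \<in> V b"
    then show "hcomp G j (M x y) = M (hcomp G j x) y"
      using hcomp_mult[OF lG] by (simp add: G_mult(1))
  qed
  moreover have "hcomp G j (M u v) = M u (hcomp G j v)" for u v
  proof (rule bilinear_eqI_V[where \<Phi> = "\<lambda>u v. hcomp G j (M u v)" and \<Psi> = "\<lambda>u v. M u (hcomp G j v)"])
    show "lin_map (\<lambda>u. hcomp G j (M u v))" for v by (rule lin_map_compose[OF lG' lin_map_M_left])
    show "lin_map (\<lambda>v. hcomp G j (M u v))" for u by (rule lin_map_compose[OF lG' lin_map_M_right])
    show "lin_map (\<lambda>u. M u (hcomp G j v))" for v by (rule lin_map_M_left)
    show "lin_map (\<lambda>v. M u (hcomp G j v))" for u by (rule lin_map_compose[OF lin_map_M_right lG'])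
    fix a b x y assume "a < m" "b < m" "x \<in> V a" "y \<in> V b"
    then show "hcomp G j (M x y) = M x (hcomp G j y)"
      using hcomp_mult[OF lG] by (simp add: G_mult(2))
  qed
  ultimately show ?thesis using lG' by (simp add: centroid_def lin_iff_lin_map)
qed

end

definition op_span :: "('a,'k::field) op set \<Rightarrow> ('a,'k) op set" where
  "op_span B = {(\<lambda>x. \<Sum>f\<in>F. sc (c f) (f x)) | F c. finite F \<and> F \<subseteq> B}"

lemma op_span_0: "(\<lambda>x. 0) \<in> op_span B"
  unfolding op_span_def by (rule CollectI, rule exI[of _ "{}"]) simp

lemma is_basis_subset: "is_basis E B \<Longrightarrow> B \<subseteq> E"
  by (simp add: is_basis_def)

lemma is_basis_span: "is_basis E B \<Longrightarrow> E \<subseteq> op_span B"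
  unfolding is_basis_def op_span_def by (elim conjE) (auto dest!: bspec)

lemma is_basis_independent:
  assumes "is_basis E B" "finite F" "F \<subseteq> B" "(\<lambda>x. \<Sum>f\<in>F. sc (c f) (f x)) = (\<lambda>x. 0)" "f \<in> F"
  shows "c f = 0"
proof -
  have "\<forall>F c. finite F \<and> F \<subseteq> B \<and> (\<lambda>x. \<Sum>f\<in>F. sc (c f) (f x)) = (\<lambda>x. 0) \<longrightarrow> (\<forall>f\<in>F. c f = 0)"
    using assms(1) unfolding is_basis_def by (elim conjE)
  then show ?thesis using assms(2-5) by blast
qed

lemma ltensor_0:
  fixes EV :: "('a,'k::field) op set" and EW :: "('b,'k) op set"
  assumes "(\<lambda>x. 0) \<in> EV" "w0 \<in> EW"
  shows "(\<lambda>u. 0) \<in> ltensor EV EW"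
proof -
  have "(\<lambda>u. 0) = opsum (\<lambda>i::'a \<times> nat. optens (\<lambda>x. 0) w0)"
    by (rule ext) (simp add: opsum_def)
  moreover have "summable_fam (\<lambda>i::'a \<times> nat. (\<lambda>x::('a,'k) vec. 0::('a,'k) vec))"
    by (simp add: summable_fam_def)
  ultimately show ?thesis unfolding ltensor_def
    by (intro CollectI exI[of _ "\<lambda>i::'a \<times> nat. \<lambda>x::('a,'k) vec. 0::('a,'k) vec"] exI[of _ "\<lambda>i::'a \<times> nat. w0"])
       (use assms in auto)
qed

lemma rtensor_0:
  fixes B :: "('a,'k::field) op set" and EW :: "('b,'k) op set"
  assumes "(\<lambda>x. 0) \<in> EW"
  shows "(\<lambda>u. 0) \<in> rtensor B EW"
proof -
  have "(\<lambda>u. 0) = opsum (\<lambda>\<gamma>::('a,'k) op. optens \<gamma> (\<lambda>x::('b,'k) vec. 0::('b,'k) vec))"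
    by (rule ext) (simp add: opsum_def)
  moreover have "summable_fam (\<lambda>\<gamma>::('a,'k) op. (\<lambda>x::('b,'k) vec. 0::('b,'k) vec))"
    by (simp add: summable_fam_def)
  ultimately show ?thesis unfolding rtensor_def
    by (intro CollectI exI[of _ "\<lambda>\<gamma>::('a,'k) op. \<lambda>x::('b,'k) vec. 0::('b,'k) vec"]) (use assms in auto)
qed

lemma opsum_reindex:
  assumes inj: "inj_on h N" and out: "\<And>i. i \<notin> N \<Longrightarrow> F i u = 0"
  shows "opsum (\<lambda>p. if p \<in> h ` N then F (inv_into N h p) else (\<lambda>x. 0)) u = opsum F u"
proof -
  let ?F = "\<lambda>p. if p \<in> h ` N then F (inv_into N h p) else (\<lambda>x. 0)"
  let ?K = "{i. F i u \<noteq> 0}"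
  have KN: "?K \<subseteq> N" using out by blast
  have F_h: "?F (h i) = F i" if "i \<in> N" for i using inj that by (simp add: inv_into_f_f)
  have "{p. ?F p u \<noteq> 0} = h ` ?K"
  proof
    show "{p. ?F p u \<noteq> 0} \<subseteq> h ` ?K"
    proof
      fix p assume "p \<in> {p. ?F p u \<noteq> 0}"
      then have "p \<in> h ` N" "F (inv_into N h p) u \<noteq> 0" by (auto split: if_splits)
      then have "inv_into N h p \<in> ?K" "p = h (inv_into N h p)" by (simp_all add: f_inv_into_f)
      then show "p \<in> h ` ?K" by blast
    qed
    show "h ` ?K \<subseteq> {p. ?F p u \<noteq> 0}" using KN F_h by force
  qed
  then have "opsum ?F u = (\<Sum>i\<in>?K. ?F (h i) u)"
    unfolding opsum_def by (simp add: sum.reindex[OF inj_on_subset[OF inj KN]])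
  also have "\<dots> = opsum F u"
    unfolding opsum_def
  proof (rule sum.cong[OF refl])
    fix i assume "i \<in> ?K"
    then have "i \<in> N" using KN by blast
    then show "?F (h i) u = F i u" by (simp only: F_h)
  qed
  finally show ?thesis .
qed

text \<open>The definition of \<open>ltensor\<close> fixes the index type \<open>'a \<times> nat\<close>. A summable family with
  any index type is reindexed into it by sending \<open>i\<close> to a pair \<open>(a, n)\<close> with \<open>f i (ebas a) \<noteq> 0\<close>
  and \<open>n\<close> numbering the finitely many such \<open>i\<close> for this \<open>a\<close>; the members that vanish on
  every basis vector contribute nothing.\<close>
lemma summable_fam_index_pairs:
  fixes f :: "'i \<Rightarrow> ('a,'k::field) op"
  assumes S: "summable_fam f"
  obtains h :: "'i \<Rightarrow> 'a \<times> nat" where "inj_on h {i. \<exists>a. f i (ebas a) \<noteq> 0}"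
proof
  define Na where "Na a = {i. f i (ebas a) \<noteq> 0}" for a
  define ai where "ai i = (SOME a. f i (ebas a) \<noteq> 0)" for i
  have ai: "i \<in> Na (ai i)" if "\<exists>a. f i (ebas a) \<noteq> 0" for i
    using someI_ex[OF that] unfolding Na_def ai_def by auto
  have inj_Na: "inj_on (to_nat_on (Na a)) (Na a)" for a
    using S by (intro inj_on_to_nat_on countable_finite) (simp add: summable_fam_def Na_def)
  show "inj_on (\<lambda>i. (ai i, to_nat_on (Na (ai i)) i)) {i. \<exists>a. f i (ebas a) \<noteq> 0}"
  proof (intro inj_onI)
    fix i i' assume i: "i \<in> {i. \<exists>a. f i (ebas a) \<noteq> 0}" "i' \<in> {i. \<exists>a. f i (ebas a) \<noteq> 0}"
      and eq: "(ai i, to_nat_on (Na (ai i)) i) = (ai i', to_nat_on (Na (ai i')) i')"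
    then have a: "ai i = ai i'" by simp
    then have "to_nat_on (Na (ai i)) i = to_nat_on (Na (ai i)) i'" using eq by simp
    moreover have "i \<in> Na (ai i)" using ai i(1) by simp
    moreover have "i' \<in> Na (ai i)" unfolding a using ai i(2) by simp
    ultimately show "i = i'" using inj_onD[OF inj_Na] by blast
  qed
qed

lemma ltensorI:
  fixes f :: "'i \<Rightarrow> ('a,'k::field) op" and g :: "'i \<Rightarrow> ('b,'k) op"
  assumes S: "summable_fam f" and EV: "\<And>i. f i \<in> EV" and EW: "\<And>i. g i \<in> EW"
    and Z: "(\<lambda>x. 0) \<in> EV" and g0: "g0 \<in> EW"
  shows "opsum (\<lambda>i. optens (f i) (g i)) \<in> ltensor EV EW"
proof -
  define N where "N = {i. \<exists>a. f i (ebas a) \<noteq> 0}"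
  obtain h :: "'i \<Rightarrow> 'a \<times> nat" where inj: "inj_on h N"
    using summable_fam_index_pairs[OF S] unfolding N_def by blast
  define f' where "f' p = (if p \<in> h ` N then f (inv_into N h p) else (\<lambda>x. 0))" for p
  define g' where "g' p = (if p \<in> h ` N then g (inv_into N h p) else g0)" for p
  have "summable_fam f'"
    unfolding summable_fam_def
  proof
    fix v
    have "{p. f' p v \<noteq> 0} \<subseteq> h ` {i. f i v \<noteq> 0}"
    proof
      fix p assume "p \<in> {p. f' p v \<noteq> 0}"
      then have "p \<in> h ` N" "f (inv_into N h p) v \<noteq> 0" by (auto simp: f'_def split: if_splits)
      then have "inv_into N h p \<in> {i. f i v \<noteq> 0}" "p = h (inv_into N h p)" by (simp_all add: f_inv_into_f)
      then show "p \<in> h ` {i. f i v \<noteq> 0}" by blast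
    qed
    moreover have "finite (h ` {i. f i v \<noteq> 0})" using S by (simp add: summable_fam_def)
    ultimately show "finite {p. f' p v \<noteq> 0}" by (rule finite_subset)
  qed
  moreover have "f' p \<in> EV" "g' p \<in> EW" for p
    using EV Z EW g0 by (simp_all add: f'_def g'_def)
  moreover have "opsum (\<lambda>i. optens (f i) (g i)) = opsum (\<lambda>p. optens (f' p) (g' p))"
  proof (rule ext, rule sym)
    fix u
    have "optens (f' p) (g' p) = (if p \<in> h ` N then optens (f (inv_into N h p)) (g (inv_into N h p)) else (\<lambda>x. 0))" for p
      by (auto simp: f'_def g'_def)
    moreover have "optens (f i) (g i) u = 0" if "i \<notin> N" for i
      using that by (intro optens_eq_0) (auto simp: N_def)
    ultimately show "opsum (\<lambda>p. optens (f' p) (g' p)) u = opsum (\<lambda>i. optens (f i) (g i)) u"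
      using opsum_reindex[OF inj, of "\<lambda>i. optens (f i) (g i)" u] by simp
  qed
  ultimately show ?thesis unfolding ltensor_def by blast
qed

lemma ltensor_sum:
  fixes T :: "nat \<Rightarrow> ('a \<times> 'b,'k::field) op"
  assumes T: "\<And>k. k < m \<Longrightarrow> T k \<in> ltensor (EV k) (EW k)"
    and EV: "\<And>k. k < m \<Longrightarrow> EV k \<subseteq> EV'" and EW: "\<And>k. k < m \<Longrightarrow> EW k \<subseteq> EW'"
    and Z: "(\<lambda>x. 0) \<in> EV'" and w0: "w0 \<in> EW'"
  shows "(\<lambda>u. \<Sum>k<m. T k u) \<in> ltensor EV' EW'"
proof -
  have "\<forall>k. \<exists>f g. k < m \<longrightarrow> T k = opsum (\<lambda>i. optens (f i) (g i)) \<and> (\<forall>i. f i \<in> EV k)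
      \<and> (\<forall>i. g i \<in> EW k) \<and> summable_fam (f :: 'a \<times> nat \<Rightarrow> ('a,'k) op)"
    using T unfolding ltensor_def by blast
  then obtain f :: "nat \<Rightarrow> 'a \<times> nat \<Rightarrow> ('a,'k) op" and g where "\<forall>k<m. T k = opsum (\<lambda>i. optens (f k i) (g k i)) \<and> (\<forall>i. f k i \<in> EV k)
      \<and> (\<forall>i. g k i \<in> EW k) \<and> summable_fam (f k)"
    unfolding choice_iff by blast
  then have fg: "\<And>k. k < m \<Longrightarrow> T k = opsum (\<lambda>i. optens (f k i) (g k i))"
    "\<And>k i. k < m \<Longrightarrow> f k i \<in> EV k" "\<And>k i. k < m \<Longrightarrow> g k i \<in> EW k"
    "\<And>k. k < m \<Longrightarrow> summable_fam (f k)"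
    by blast+
  define f' where "f' p = (if fst p < m then f (fst p) (snd p) else (\<lambda>x. 0))" for p
  define g' where "g' p = (if fst p < m then g (fst p) (snd p) else w0)" for p
  have S: "summable_fam f'"
    unfolding f'_def using summable_pairs[of m "\<lambda>k. if k < m then f k else (\<lambda>i x. 0)"] fg(4)
    by (simp add: if_distrib[of "\<lambda>F. F _"] cong: if_cong)
  have f': "f' p \<in> EV'" for p
  proof (cases "fst p < m")
    case True
    then show ?thesis using fg(2)[OF True, of "snd p"] EV[OF True] by (simp add: f'_def subsetD)
  qed (simp add: f'_def Z)
  have g': "g' p \<in> EW'" for p
  proof (cases "fst p < m")
    case True
    then show ?thesis using fg(3)[OF True, of "snd p"] EW[OF True] by (simp add: g'_def subsetD)
  qed (simp add: g'_def w0)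
  have "opsum (\<lambda>p. optens (f' p) (g' p)) \<in> ltensor EV' EW'"
    by (rule ltensorI[OF S f' g' Z w0])
  moreover have "(\<lambda>u. \<Sum>k<m. T k u) = opsum (\<lambda>p. optens (f' p) (g' p))"
  proof (rule ext, rule sym)
    fix u
    have "opsum (\<lambda>p. optens (f' p) (g' p)) u =
        opsum (\<lambda>p. (\<lambda>k i. if k < m then optens (f k i) (g k i) else (\<lambda>x. 0)) (fst p) (snd p)) u"
      by (simp add: f'_def g'_def if_distrib[of "\<lambda>x. x u"] opsum_def cong: if_cong)
    also have "\<dots> = (\<Sum>k<m. opsum (\<lambda>i. if k < m then optens (f k i) (g k i) else (\<lambda>x. 0)) u)"
      by (rule opsum_pairs) (auto intro: summable_optens_left fg(4))
    also have "\<dots> = (\<Sum>k<m. T k u)" by (simp add: fg(1))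
    finally show "opsum (\<lambda>p. optens (f' p) (g' p)) u = (\<Sum>k<m. T k u)" .
  qed
  ultimately show ?thesis by simp
qed

text \<open>When each \<open>\<phi> i = \<Sum>\<^bsub>\<beta>\<in>F i\<^esub> c i \<beta> \<beta>\<close> is expanded in a basis \<open>B\<close>, this collects, for every
  basis element \<open>\<beta>\<close>, the operators \<open>g i\<close> weighted by the coefficients of \<open>\<beta>\<close>.\<close>
definition collect_coeffs ::
    "('a,'k::field) op set \<Rightarrow> ('i \<Rightarrow> ('a,'k) op set) \<Rightarrow> ('i \<Rightarrow> ('a,'k) op \<Rightarrow> 'k) \<Rightarrow> ('i \<Rightarrow> ('b,'k) op)
      \<Rightarrow> ('a,'k) op \<Rightarrow> ('b,'k) op" where
  "collect_coeffs B F c g \<beta> =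
    (if \<beta> \<in> B then opsum (\<lambda>i s. sc (if \<beta> \<in> F i then c i \<beta> else 0) (g i s)) else (\<lambda>s. 0))"

lemma summable_collect_coeffs:
  assumes S: "summable_fam g" and fin: "\<And>i. finite (F i)"
  shows "summable_fam (collect_coeffs B F c g)"
  unfolding summable_fam_def
proof
  fix s
  have "{\<beta>. collect_coeffs B F c g \<beta> s \<noteq> 0} \<subseteq> (\<Union>i\<in>{i. g i s \<noteq> 0}. F i)"
  proof
    fix \<beta> assume "\<beta> \<in> {\<beta>. collect_coeffs B F c g \<beta> s \<noteq> 0}"
    then have "opsum (\<lambda>i s. sc (if \<beta> \<in> F i then c i \<beta> else 0) (g i s)) s \<noteq> 0"
      by (auto simp: collect_coeffs_def split: if_splits)
    then obtain i where "sc (if \<beta> \<in> F i then c i \<beta> else 0) (g i s) \<noteq> 0" unfolding opsum_def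
      by (metis (mono_tags, lifting) sum.neutral)
    then have "\<beta> \<in> F i" "g i s \<noteq> 0" by (auto split: if_splits)
    then show "\<beta> \<in> (\<Union>i\<in>{i. g i s \<noteq> 0}. F i)" by blast
  qed
  moreover have "finite (\<Union>i\<in>{i. g i s \<noteq> 0}. F i)" using S fin by (simp add: summable_fam_def)
  ultimately show "finite {\<beta>. collect_coeffs B F c g \<beta> s \<noteq> 0}" by (rule finite_subset)
qed

lemma opsum_optens_collect_coeffs:
  fixes \<phi> :: "'i \<Rightarrow> ('a,'k::field) op" and g :: "'i \<Rightarrow> ('b,'k) op"
    and F :: "'i \<Rightarrow> ('a,'k) op set" and c :: "'i \<Rightarrow> ('a,'k) op \<Rightarrow> 'k"
  assumes S: "summable_fam g" and fin: "\<And>i. finite (F i)" and FB: "\<And>i. F i \<subseteq> B"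
    and phi: "\<And>i. \<phi> i = (\<lambda>x. \<Sum>\<beta>\<in>F i. sc (c i \<beta>) (\<beta> x))"
  shows "opsum (\<lambda>i. optens (\<phi> i) (g i)) = opsum (\<lambda>\<beta>. optens \<beta> (collect_coeffs B F c g \<beta>))"
proof -
  define G where "G = collect_coeffs B F c g"
  define c' where "c' i \<beta> = (if \<beta> \<in> F i then c i \<beta> else 0)" for i \<beta>
  have G: "G = (\<lambda>\<beta>. if \<beta> \<in> B then opsum (\<lambda>i s. sc (c' i \<beta>) (g i s)) else (\<lambda>s. 0))"
    unfolding G_def c'_def collect_coeffs_def[abs_def] ..
  show ?thesis
    unfolding G_def[symmetric]
  proof
    fix u :: "('a \<times> 'b, 'k) vec"
    define I where "I = (\<Union>p\<in>snd ` Poly_Mapping.keys u. {i. g i (ebas p) \<noteq> 0})"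
    define BU where "BU = (\<Union>i\<in>I. F i)"
    have finI: "finite I" using S by (simp add: I_def summable_fam_def)
    have finBU: "finite BU" using finI fin by (simp add: BU_def)
    have zI: "i \<notin> I \<Longrightarrow> q \<in> Poly_Mapping.keys u \<Longrightarrow> g i (ebas (snd q)) = 0" for i q
      by (auto simp: I_def)
    have Gq: "G \<beta> (ebas (snd q)) = (\<Sum>i\<in>I. sc (c' i \<beta>) (g i (ebas (snd q))))"
      if "\<beta> \<in> B" "q \<in> Poly_Mapping.keys u" for \<beta> q
      using that by (simp add: G) (rule opsum_eq_sum, rule finI, simp add: zI)
    have "opsum (\<lambda>i. optens (\<phi> i) (g i)) u = (\<Sum>i\<in>I. optens (\<phi> i) (g i) u)"
      by (rule opsum_eq_sum[OF finI], rule optens_eq_0) (simp add: zI)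
    also have "\<dots> = (\<Sum>i\<in>I. \<Sum>\<beta>\<in>F i. sc (c i \<beta>) (optens \<beta> (g i) u))"
      by (simp add: phi optens_sum_left optens_sc_left)
    also have "\<dots> = (\<Sum>i\<in>I. \<Sum>\<beta>\<in>BU. sc (c' i \<beta>) (optens \<beta> (g i) u))"
    proof (rule sum.cong[OF refl])
      fix i assume "i \<in> I"
      then have "F i \<subseteq> BU" by (auto simp: BU_def)
      then show "(\<Sum>\<beta>\<in>F i. sc (c i \<beta>) (optens \<beta> (g i) u)) = (\<Sum>\<beta>\<in>BU. sc (c' i \<beta>) (optens \<beta> (g i) u))"
        by (intro sum.mono_neutral_cong_left finBU) (auto simp: c'_def)
    qed
    also have "\<dots> = (\<Sum>\<beta>\<in>BU. \<Sum>i\<in>I. sc (c' i \<beta>) (optens \<beta> (g i) u))" by (rule sum.swap)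
    also have "\<dots> = (\<Sum>\<beta>\<in>BU. optens \<beta> (G \<beta>) u)"
    proof (rule sum.cong[OF refl])
      fix \<beta> assume "\<beta> \<in> BU"
      then have bB: "\<beta> \<in> B" using FB by (auto simp: BU_def)
      have "optens \<beta> (G \<beta>) u = optens \<beta> (\<lambda>s. \<Sum>i\<in>I. sc (c' i \<beta>) (g i s)) u"
        by (rule optens_cong) (auto simp: Gq[OF bB])
      also have "\<dots> = (\<Sum>i\<in>I. sc (c' i \<beta>) (optens \<beta> (g i) u))"
        by (simp add: optens_sum_right optens_sc_right)
      finally show "(\<Sum>i\<in>I. sc (c' i \<beta>) (optens \<beta> (g i) u)) = optens \<beta> (G \<beta>) u" by simp
    qed
    also have "\<dots> = opsum (\<lambda>\<beta>. optens \<beta> (G \<beta>)) u"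
    proof (rule opsum_eq_sum[OF finBU, symmetric])
      fix \<beta> assume nb: "\<beta> \<notin> BU"
      show "optens \<beta> (G \<beta>) u = 0"
      proof (cases "\<beta> \<in> B")
        case True
        show ?thesis
        proof (rule optens_eq_0)
          fix q assume q: "q \<in> Poly_Mapping.keys u"
          have "G \<beta> (ebas (snd q)) = 0" unfolding Gq[OF True q]
            by (rule sum.neutral) (use nb in \<open>auto simp: BU_def c'_def\<close>)
          then show "tens (\<beta> (ebas (fst q))) (G \<beta> (ebas (snd q))) = 0" by simp
        qed
      qed (simp add: G optens_eq_sum_keys)
    qed
    finally show "opsum (\<lambda>i. optens (\<phi> i) (g i)) u = opsum (\<lambda>\<beta>. optens \<beta> (G \<beta>)) u" .
  qed
qed

lemma rtensorI_span:
  fixes \<phi> :: "'i \<Rightarrow> ('a,'k::field) op" and g :: "'i \<Rightarrow> ('b,'k) op"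
  assumes S: "summable_fam g" and \<phi>: "\<And>i. \<phi> i \<in> op_span B" and g: "\<And>i. g i \<in> W"
    and W_scale: "\<And>w r. w \<in> W \<Longrightarrow> (\<lambda>x. sc r (w x)) \<in> W"
    and W_opsum: "\<And>F :: 'i \<Rightarrow> ('b,'k) op. summable_fam F \<Longrightarrow> (\<And>i. F i \<in> W) \<Longrightarrow> opsum F \<in> W"
  shows "opsum (\<lambda>i. optens (\<phi> i) (g i)) \<in> rtensor B W"
proof -
  have "\<forall>i. \<exists>F c. finite F \<and> F \<subseteq> B \<and> \<phi> i = (\<lambda>x. \<Sum>\<beta>\<in>F. sc (c \<beta>) (\<beta> x))"
    using \<phi> unfolding op_span_def by blast
  then obtain F c where "\<forall>i. finite (F i) \<and> F i \<subseteq> B \<and> \<phi> i = (\<lambda>x. \<Sum>\<beta>\<in>F i. sc (c i \<beta>) (\<beta> x))"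
    unfolding choice_iff by blast
  then have F: "\<And>i. finite (F i)" "\<And>i. F i \<subseteq> B"
    and c: "\<And>i. \<phi> i = (\<lambda>x. \<Sum>\<beta>\<in>F i. sc (c i \<beta>) (\<beta> x))"
    by blast+
  define G where "G = collect_coeffs B F c g"
  have "G \<beta> \<in> W" if "\<beta> \<in> B" for \<beta>
  proof -
    have "summable_fam (\<lambda>i s. sc (if \<beta> \<in> F i then c i \<beta> else 0) (g i s))"
      using S unfolding summable_fam_def by (rule all_forward) (auto elim: finite_subset[rotated])
    then show ?thesis using that by (simp add: G_def collect_coeffs_def W_opsum W_scale g)
  qed
  moreover have "G \<beta> = (\<lambda>_. 0)" if "\<beta> \<notin> B" for \<beta> using that by (simp add: G_def collect_coeffs_def)
  moreover have "summable_fam G" unfolding G_def by (rule summable_collect_coeffs[OF S F(1)])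
  ultimately show ?thesis
    unfolding opsum_optens_collect_coeffs[OF S F c] G_def[symmetric] rtensor_def by blast
qed

lemma rtensor_sum:
  fixes T :: "nat \<Rightarrow> ('a \<times> 'b,'k::field) op"
  assumes T: "\<And>k. k < m \<Longrightarrow> T k \<in> rtensor (B k) (W k)"
    and B: "\<And>k. k < m \<Longrightarrow> B k \<subseteq> op_span B'" and W: "\<And>k. k < m \<Longrightarrow> W k \<subseteq> W'"
    and W_0: "(\<lambda>x. 0) \<in> W'"
    and W_scale: "\<And>w r. w \<in> W' \<Longrightarrow> (\<lambda>x. sc r (w x)) \<in> W'"
    and W_opsum: "\<And>F :: nat \<times> ('a,'k) op \<Rightarrow> ('b,'k) op. summable_fam F \<Longrightarrow> (\<And>i. F i \<in> W') \<Longrightarrow> opsum F \<in> W'"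
  shows "(\<lambda>u. \<Sum>k<m. T k u) \<in> rtensor B' W'"
proof -
  have "\<forall>k. \<exists>g. k < m \<longrightarrow> T k = opsum (\<lambda>\<beta>. optens \<beta> (g \<beta>)) \<and> (\<forall>\<beta>\<in>B k. g \<beta> \<in> W k)
      \<and> (\<forall>\<beta>. \<beta> \<notin> B k \<longrightarrow> g \<beta> = (\<lambda>_. 0)) \<and> summable_fam g"
    using T unfolding rtensor_def by blast
  then obtain g where "\<forall>k<m. T k = opsum (\<lambda>\<beta>. optens \<beta> (g k \<beta>)) \<and> (\<forall>\<beta>\<in>B k. g k \<beta> \<in> W k)
      \<and> (\<forall>\<beta>. \<beta> \<notin> B k \<longrightarrow> g k \<beta> = (\<lambda>_. 0)) \<and> summable_fam (g k)"
    unfolding choice_iff by blast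
  then have g: "\<And>k. k < m \<Longrightarrow> T k = opsum (\<lambda>\<beta>. optens \<beta> (g k \<beta>))"
    "\<And>k \<beta>. k < m \<Longrightarrow> \<beta> \<in> B k \<Longrightarrow> g k \<beta> \<in> W k"
    "\<And>k \<beta>. k < m \<Longrightarrow> \<beta> \<notin> B k \<Longrightarrow> g k \<beta> = (\<lambda>_. 0)"
    "\<And>k. k < m \<Longrightarrow> summable_fam (g k)"
    by blast+
  define \<phi> where "\<phi> p = (if fst p < m \<and> snd p \<in> B (fst p) then snd p else (\<lambda>x. 0))" for p
  define g' where "g' p = (if fst p < m then g (fst p) (snd p) else (\<lambda>x. 0))" for p
  have "summable_fam g'"
    unfolding g'_def using summable_pairs[of m "\<lambda>k. if k < m then g k else (\<lambda>\<beta> x. 0)"] g(4)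
    by (simp add: if_distrib[of "\<lambda>F. F _"] cong: if_cong)
  moreover have "\<phi> p \<in> op_span B'" for p
    using B op_span_0 by (auto simp: \<phi>_def)
  moreover have "g' p \<in> W'" for p
  proof (cases "fst p < m \<and> snd p \<in> B (fst p)")
    case True
    then show ?thesis using g(2)[of "fst p" "snd p"] W[of "fst p"] by (simp add: g'_def subsetD)
  qed (use g(3) W_0 in \<open>auto simp: g'_def\<close>)
  ultimately have "opsum (\<lambda>p. optens (\<phi> p) (g' p)) \<in> rtensor B' W'"
    by (rule rtensorI_span[OF _ _ _ W_scale W_opsum])
  moreover have "(\<lambda>u. \<Sum>k<m. T k u) = opsum (\<lambda>p. optens (\<phi> p) (g' p))"
  proof (rule ext, rule sym)
    fix u
    have "optens (\<phi> p) (g' p) = (if fst p < m then optens (snd p) (g (fst p) (snd p)) else (\<lambda>x. 0))" for p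
      using g(3)[of "fst p" "snd p"] by (auto simp: \<phi>_def g'_def optens_eq_sum_keys)
    then have "opsum (\<lambda>p. optens (\<phi> p) (g' p)) u
        = opsum (\<lambda>p. (\<lambda>k \<beta>. if k < m then optens \<beta> (g k \<beta>) else (\<lambda>x. 0)) (fst p) (snd p)) u"
      by simp
    also have "\<dots> = (\<Sum>k<m. opsum (\<lambda>\<beta>. if k < m then optens \<beta> (g k \<beta>) else (\<lambda>x. 0)) u)"
      by (rule opsum_pairs) (auto intro: summable_optens_right g(4))
    also have "\<dots> = (\<Sum>k<m. T k u)" by (simp add: g(1))
    finally show "opsum (\<lambda>p. optens (\<phi> p) (g' p)) u = (\<Sum>k<m. T k u)" .
  qed
  ultimately show ?thesis by simp
qed

subsection \<open>Derivations of a tensor product\<close>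

definition slice :: "'b \<Rightarrow> ('a \<times> 'b, 'k::zero) vec \<Rightarrow> ('a,'k) vec" where
  "slice r w = Abs_poly_mapping (\<lambda>a. Poly_Mapping.lookup w (a, r))"

lemma lookup_slice: "Poly_Mapping.lookup (slice r w) a = Poly_Mapping.lookup w (a, r)"
proof -
  have "{a. Poly_Mapping.lookup w (a, r) \<noteq> 0} \<subseteq> fst ` Poly_Mapping.keys w"
    by (force simp: in_keys_iff)
  then have "finite {a. Poly_Mapping.lookup w (a, r) \<noteq> 0}"
    by (rule finite_subset) simp
  then show ?thesis by (simp add: slice_def lookup_Abs_poly_mapping)
qed

lemma lin_map_slice: "lin_map (slice r)"
  by (simp add: lin_map_def) (auto intro!: poly_mapping_eqI simp: lookup_slice lookup_add)

lemma slice_tens: "slice r (tens x s) = sc (Poly_Mapping.lookup s r) x"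
  by (rule poly_mapping_eqI) (simp add: lookup_slice lookup_tens mult.commute)

lemma vec_eq_sum_slices: "w = (\<Sum>r\<in>snd ` Poly_Mapping.keys w. tens (slice r w) (ebas r))"
proof (rule poly_mapping_eqI)
  fix q :: "'a \<times> 'b"
  obtain a p where q: "q = (a, p)" by (cases q)
  have "Poly_Mapping.lookup (\<Sum>r\<in>snd ` Poly_Mapping.keys w. tens (slice r w) (ebas r)) q =
     (\<Sum>r\<in>snd ` Poly_Mapping.keys w. if r = p then Poly_Mapping.lookup w (a, p) else 0)"
    unfolding q lookup_sum by (rule sum.cong) (auto simp: lookup_tens lookup_slice lookup_ebas)
  also have "\<dots> = Poly_Mapping.lookup w q"
  proof (cases "p \<in> snd ` Poly_Mapping.keys w")
    case False
    then have "(a, p) \<notin> Poly_Mapping.keys w" by force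
    then show ?thesis using False by (simp add: q in_keys_iff)
  qed (simp add: q)
  finally show "Poly_Mapping.lookup w q = Poly_Mapping.lookup (\<Sum>r\<in>snd ` Poly_Mapping.keys w. tens (slice r w) (ebas r)) q"
    by simp
qed

lemma slice_neq_0: "slice r w \<noteq> 0 \<Longrightarrow> r \<in> snd ` Poly_Mapping.keys w"
proof -
  assume "slice r w \<noteq> 0"
  then obtain a where "Poly_Mapping.lookup (slice r w) a \<noteq> 0"
    by (metis lookup_zero poly_mapping_eqI)
  then have "(a, r) \<in> Poly_Mapping.keys w" by (simp add: lookup_slice in_keys_iff)
  then show ?thesis by force
qed

locale tensor_algebras =
  fixes MA :: "('a,'k::field) prod" and MS :: "('b,'k) prod" and BC :: "('a,'k) op set"
  assumes A_alg: "bilin MA" and A_perfect: "perfect MA"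
    and S_alg: "bilin MS" and S_cau: "comm_assoc_unital MS"
    and psi: "psi_iso MA MS"
    and basisC: "is_basis (centroid MA) BC"
begin

abbreviation MT :: "('a \<times> 'b,'k) prod" where "MT \<equiv> tmult MA MS"

lemma MT_tens: "MT (tens x s) (tens y t) = tens (MA x y) (MS s t)"
  by (rule tmult_tens[OF A_alg S_alg])

lemmas lin_map_MA_left = bilin_lin_map_left[OF A_alg]
  and lin_map_MA_right = bilin_lin_map_right[OF A_alg]
  and lin_map_MS_left = bilin_lin_map_left[OF S_alg]
  and lin_map_MS_right = bilin_lin_map_right[OF S_alg]

lemma MS_comm: "MS x y = MS y x"
  using S_cau by (simp add: comm_assoc_unital_def)

lemma MS_assoc: "MS (MS x y) z = MS x (MS y z)"
  using S_cau unfolding comm_assoc_unital_def by blast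

definition e :: "('b,'k) vec" where
  "e = (SOME u. \<forall>x. MS u x = x)"

lemma unit_S_left: "MS e x = x"
proof -
  have "\<exists>e. \<forall>x. MS e x = x" using S_cau by (simp add: comm_assoc_unital_def)
  then show ?thesis unfolding e_def by (rule someI_ex[where P = "\<lambda>u. \<forall>x. MS u x = x", THEN spec])
qed

lemma unit_S_right: "MS x e = x"
  using unit_S_left MS_comm by metis

lemma derivation_unit_S: "g \<in> derivations MS \<Longrightarrow> g e = 0"
proof -
  assume "g \<in> derivations MS"
  then have "g (MS e e) = MS (g e) e + MS e (g e)" by (simp add: derivations_def)
  then show ?thesis by (simp add: unit_S_left unit_S_right)
qed

lemma Lset_obtain: "(\<And>i. g i \<in> Lset MS X) \<Longrightarrow> \<exists>s. \<forall>i. g i = MS (s i) \<and> s i \<in> X"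
  unfolding Lset_def by (rule choice) blast

lemma BC_centroid: "\<gamma> \<in> BC \<Longrightarrow> \<gamma> \<in> centroid MA"
  using is_basis_subset[OF basisC] by blast

lemma BC_lin_map: "\<gamma> \<in> BC \<Longrightarrow> lin_map \<gamma>"
  by (rule centroid_lin_map[OF BC_centroid])

lemma optens_derivation_mult:
  assumes f: "f \<in> derivations MA"
  shows "optens f (MS s) \<in> derivations MT"
proof -
  have lf: "lin_map f" using f by (rule derivation_lin_map)
  let ?T = "optens f (MS s)"
  have "?T (MT u v) = MT (?T u) v + MT u (?T v)" for u v
  proof (rule bilinear_eqI_tens[where \<Phi> = "\<lambda>u v. ?T (MT u v)" and \<Psi> = "\<lambda>u v. MT (?T u) v + MT u (?T v)"])
    show "lin_map (\<lambda>u. ?T (MT u v))" for v by (rule lin_map_compose[OF lin_map_optens lin_map_tmult_left])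
    show "lin_map (\<lambda>v. ?T (MT u v))" for u by (rule lin_map_compose[OF lin_map_optens lin_map_tmult_right])
    show "lin_map (\<lambda>u. MT (?T u) v + MT u (?T v))" for v
      by (rule lin_map_plus[OF lin_map_compose[OF lin_map_tmult_left lin_map_optens] lin_map_tmult_left])
    show "lin_map (\<lambda>v. MT (?T u) v + MT u (?T v))" for u
      by (rule lin_map_plus[OF lin_map_tmult_right lin_map_compose[OF lin_map_tmult_right lin_map_optens]])
    fix x a y b
    have "f (MA x y) = MA (f x) y + MA x (f y)" using f by (simp add: derivations_def)
    moreover have "MS s (MS a b) = MS (MS s a) b" by (simp add: MS_assoc)
    moreover have "MS s (MS a b) = MS a (MS s b)" by (metis MS_assoc MS_comm)
    ultimately show "?T (MT (tens x a) (tens y b)) = MT (?T (tens x a)) (tens y b) + MT (tens x a) (?T (tens y b))"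
      by (simp add: MT_tens optens_tens[OF lf lin_map_MS_right] tens_add_left)
  qed
  then show ?thesis using lin_map_optens by (simp add: derivations_def lin_iff_lin_map)
qed

lemma optens_centroid_derivation:
  assumes c: "c \<in> centroid MA" and g: "g \<in> derivations MS"
  shows "optens c g \<in> derivations MT"
proof -
  have lc: "lin_map c" using c by (rule centroid_lin_map)
  have lg: "lin_map g" using g by (rule derivation_lin_map)
  let ?T = "optens c g"
  have "?T (MT u v) = MT (?T u) v + MT u (?T v)" for u v
  proof (rule bilinear_eqI_tens[where \<Phi> = "\<lambda>u v. ?T (MT u v)" and \<Psi> = "\<lambda>u v. MT (?T u) v + MT u (?T v)"])
    show "lin_map (\<lambda>u. ?T (MT u v))" for v by (rule lin_map_compose[OF lin_map_optens lin_map_tmult_left])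
    show "lin_map (\<lambda>v. ?T (MT u v))" for u by (rule lin_map_compose[OF lin_map_optens lin_map_tmult_right])
    show "lin_map (\<lambda>u. MT (?T u) v + MT u (?T v))" for v
      by (rule lin_map_plus[OF lin_map_compose[OF lin_map_tmult_left lin_map_optens] lin_map_tmult_left])
    show "lin_map (\<lambda>v. MT (?T u) v + MT u (?T v))" for u
      by (rule lin_map_plus[OF lin_map_tmult_right lin_map_compose[OF lin_map_tmult_right lin_map_optens]])
    fix x a y b
    have "g (MS a b) = MS (g a) b + MS a (g b)" using g by (simp add: derivations_def)
    moreover have "c (MA x y) = MA (c x) y" "c (MA x y) = MA x (c y)" using c unfolding centroid_def by blast+
    ultimately show "?T (MT (tens x a) (tens y b)) = MT (?T (tens x a)) (tens y b) + MT (tens x a) (?T (tens y b))"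
      by (simp add: MT_tens optens_tens[OF lc lg] tens_add_right)
  qed
  then show ?thesis using lin_map_optens by (simp add: derivations_def lin_iff_lin_map)
qed

text \<open>An element of \<open>Der(A) \<otimes>\<leftarrow> S\<close> is determined by its values on \<open>A \<otimes> e\<close>, where every element
  of \<open>C(A) \<otimes>\<rightarrow> Der(S)\<close> vanishes, because derivations kill the unit.\<close>
lemma ltensor_inter_rtensor:
  assumes X1: "X \<in> ltensor (derivations MA) (Lset MS UNIV)" and X2: "X \<in> rtensor BC (derivations MS)"
  shows "X = (\<lambda>u. 0)"
proof -
  obtain f :: "'a \<times> nat \<Rightarrow> ('a,'k) op" and g :: "'a \<times> nat \<Rightarrow> ('b,'k) op"
    where fg: "X = opsum (\<lambda>i. optens (f i) (g i))" "\<And>i. f i \<in> derivations MA"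
      "\<And>i. g i \<in> Lset MS UNIV" "summable_fam f"
    using X1 unfolding ltensor_def by blast
  obtain s where s: "\<And>i. g i = MS (s i)" using Lset_obtain[of g UNIV] fg(3) by blast
  obtain h where h: "X = opsum (\<lambda>\<gamma>. optens \<gamma> (h \<gamma>))" "\<And>\<gamma>. \<gamma> \<in> BC \<Longrightarrow> h \<gamma> \<in> derivations MS"
    "\<And>\<gamma>. \<gamma> \<notin> BC \<Longrightarrow> h \<gamma> = (\<lambda>_. 0)"
    using X2 unfolding rtensor_def by blast
  have lf: "lin_map (f i)" for i using fg(2) by (rule derivation_lin_map)
  have lX: "lin_map X"
    unfolding fg(1) by (rule lin_map_opsum[OF summable_optens_left[OF fg(4)] lin_map_optens])
  have X_unit: "X (tens x e) = 0" for x
  proof -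
    have "optens \<gamma> (h \<gamma>) (tens x e) = 0" for \<gamma>
    proof (cases "\<gamma> \<in> BC")
      case True
      then have "lin_map \<gamma>" "lin_map (h \<gamma>)" "h \<gamma> e = 0"
        using BC_lin_map h(2) derivation_lin_map derivation_unit_S by blast+
      then show ?thesis by (simp add: optens_tens)
    qed (simp add: h(3))
    then show ?thesis by (simp add: h(1) opsum_def)
  qed
  have X_tens: "X (tens x t) = optens (\<lambda>y. y) (\<lambda>v. MS v t) (X (tens x e))" for x t
  proof -
    let ?K = "{i. f i x \<noteq> 0}"
    have fK: "finite ?K" using fg(4) by (simp add: summable_fam_def)
    have X_on_tens: "X (tens x t') = (\<Sum>i\<in>?K. tens (f i x) (MS (s i) t'))" for t'
      unfolding fg(1) by (subst opsum_eq_sum[OF fK]) (auto simp: optens_tens[OF lf lin_map_MS_right] s)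
    have "X (tens x t) = (\<Sum>i\<in>?K. optens (\<lambda>y. y) (\<lambda>v. MS v t) (tens (f i x) (MS (s i) e)))"
      unfolding X_on_tens by (simp add: optens_tens[OF lin_map_id lin_map_MS_left] unit_S_right)
    also have "\<dots> = optens (\<lambda>y. y) (\<lambda>v. MS v t) (X (tens x e))"
      unfolding X_on_tens by (rule lin_map_sum[OF lin_map_optens, symmetric])
    finally show ?thesis .
  qed
  have "X (tens x t) = 0" for x t
    using X_tens[of x t] by (simp add: X_unit lin_map_zero[OF lin_map_optens])
  then show ?thesis by (intro lin_map_eqI_tens[OF lX lin_map_0]) simp
qed

lemma slice_mult_unit_right: "slice r (MT w (tens y e)) = MA (slice r w) y"
proof -
  have "(\<lambda>w. slice r (MT w (tens y e))) = (\<lambda>w. MA (slice r w) y)"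
    by (rule lin_map_eqI_tens)
       (auto intro: lin_map_compose lin_map_slice lin_map_tmult_left lin_map_MA_left
         simp: MT_tens unit_S_right slice_tens lin_map_sc[OF lin_map_MA_left])
  then show ?thesis by (rule fun_cong)
qed

lemma slice_mult_unit_left: "slice r (MT (tens x e) w) = MA x (slice r w)"
proof -
  have "(\<lambda>w. slice r (MT (tens x e) w)) = (\<lambda>w. MA x (slice r w))"
    by (rule lin_map_eqI_tens)
       (auto intro: lin_map_compose lin_map_slice lin_map_tmult_right lin_map_MA_right
         simp: MT_tens unit_S_left slice_tens lin_map_sc[OF lin_map_MA_right])
  then show ?thesis by (rule fun_cong)
qed

lemma slice_derivation:
  assumes d: "d \<in> derivations MT"
  shows "(\<lambda>x. slice r (d (tens x e))) \<in> derivations MA"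
proof -
  have "lin_map (\<lambda>x. slice r (d (tens x e)))"
    by (rule lin_map_compose[OF lin_map_slice lin_map_compose[OF derivation_lin_map[OF d] lin_map_tens_left]])
  moreover have "d (tens (MA x y) e) = MT (d (tens x e)) (tens y e) + MT (tens x e) (d (tens y e))" for x y
  proof -
    have "d (tens (MA x y) e) = d (MT (tens x e) (tens y e))" by (simp add: MT_tens unit_S_left)
    then show ?thesis using d by (simp add: derivations_def)
  qed
  ultimately show ?thesis
    by (simp add: derivations_def lin_iff_lin_map lin_map_add[OF lin_map_slice]
        slice_mult_unit_right slice_mult_unit_left)
qed

lemma derivation_ltensor_part:
  assumes d: "d \<in> derivations MT"
  obtains X where "X \<in> ltensor (derivations MA) (Lset MS UNIV)" "X \<in> derivations MT"
    and "\<And>x. X (tens x e) = d (tens x e)"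
proof -
  define dr where "dr r x = slice r (d (tens x e))" for r x
  have dr_derivation: "dr r \<in> derivations MA" for r
    unfolding dr_def[abs_def] by (rule slice_derivation[OF d])
  then have lin_dr: "lin_map (dr r)" for r by (rule derivation_lin_map)
  have dr_supp: "{r. dr r x \<noteq> 0} \<subseteq> snd ` Poly_Mapping.keys (d (tens x e))" for x
    using slice_neq_0 by (auto simp: dr_def)
  then have dr_summable: "summable_fam dr"
    unfolding summable_fam_def by (meson finite_imageI finite_keys finite_subset)
  define X where "X = opsum (\<lambda>r. optens (dr r) (MS (ebas r)))"
  have "X \<in> ltensor (derivations MA) (Lset MS UNIV)"
    unfolding X_def
    by (rule ltensorI[OF dr_summable dr_derivation]) (auto simp: Lset_def intro: derivation_0[OF A_alg])
  moreover have "X \<in> derivations MT"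
    unfolding X_def
    by (rule opsum_derivation[OF summable_optens_left[OF dr_summable] optens_derivation_mult[OF dr_derivation] bilin_tmult])
  moreover have "X (tens x e) = d (tens x e)" for x
  proof -
    let ?R = "snd ` Poly_Mapping.keys (d (tens x e))"
    have "X (tens x e) = (\<Sum>r\<in>?R. optens (dr r) (MS (ebas r)) (tens x e))"
      unfolding X_def
    proof (rule opsum_eq_sum)
      fix r assume "r \<notin> ?R"
      then have "dr r x = 0" using dr_supp[of x] by blast
      then show "optens (dr r) (MS (ebas r)) (tens x e) = 0"
        by (simp add: optens_tens[OF lin_dr lin_map_MS_right])
    qed simp
    also have "\<dots> = (\<Sum>r\<in>?R. tens (slice r (d (tens x e))) (ebas r))"
      by (simp add: optens_tens[OF lin_dr lin_map_MS_right] unit_S_right dr_def)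
    also have "\<dots> = d (tens x e)" by (rule vec_eq_sum_slices[symmetric])
    finally show ?thesis .
  qed
  ultimately show ?thesis by (rule that)
qed
end
context tensor_algebras begin

text \<open>Comparing the coefficients of each basis vector \<open>ebas p\<close> of \<open>S\<close> reduces this to the linear
  independence of \<open>BC\<close>.\<close>
lemma tens_BC_coeffs_eq_0:
  assumes F: "finite F" "F \<subseteq> BC" and Z: "\<And>x. (\<Sum>f\<in>F. tens (f x) (c f)) = 0" and "f \<in> F"
  shows "c f = 0"
proof (rule poly_mapping_eqI)
  fix p
  have "(\<lambda>x. \<Sum>f\<in>F. sc (Poly_Mapping.lookup (c f) p) (f x)) = (\<lambda>x. 0)"
  proof (rule ext, rule poly_mapping_eqI)
    fix x a
    have "Poly_Mapping.lookup (\<Sum>f\<in>F. tens (f x) (c f)) (a, p) = 0" using Z by simp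
    then show "Poly_Mapping.lookup (\<Sum>f\<in>F. sc (Poly_Mapping.lookup (c f) p) (f x)) a = Poly_Mapping.lookup 0 a"
      by (simp add: lookup_sum lookup_tens mult.commute)
  qed
  then show "Poly_Mapping.lookup (c f) p = Poly_Mapping.lookup 0 p"
    using is_basis_independent[OF basisC F] \<open>f \<in> F\<close> by simp
qed

lemma tens_BC_coeffs_unique:
  assumes "finite G" "G \<subseteq> BC" "\<And>x. (\<Sum>f\<in>G. tens (f x) (a f)) = (\<Sum>f\<in>G. tens (f x) (b f))" "f \<in> G"
  shows "a f = b f"
  using tens_BC_coeffs_eq_0[OF assms(1,2), of "\<lambda>f. a f - b f"] assms(3,4)
  by (simp add: tens_diff_right sum_subtractf)

lemma sum_list_tens_BC_expansion:
  assumes "\<forall>(\<gamma>, t)\<in>set ps. \<gamma> \<in> centroid MA"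
  shows "\<exists>F H. finite F \<and> F \<subseteq> BC \<and> (\<forall>x. (\<Sum>(\<gamma>, t)\<leftarrow>ps. tens (\<gamma> x) t) = (\<Sum>f\<in>F. tens (f x) (H f)))"
  using assms
proof (induction ps)
  case Nil
  show ?case by (rule exI[of _ "{}"]) simp
next
  case (Cons pr ps)
  obtain \<gamma> t where pr: "pr = (\<gamma>, t)" by (cases pr)
  obtain F' H' where F': "finite F'" "F' \<subseteq> BC"
    and H': "\<And>x. (\<Sum>(\<gamma>, t)\<leftarrow>ps. tens (\<gamma> x) t) = (\<Sum>f\<in>F'. tens (f x) (H' f))"
    using Cons by auto
  have "\<gamma> \<in> op_span BC" using Cons.prems pr is_basis_span[OF basisC] by auto
  then obtain Fg cg where Fg: "finite Fg" "Fg \<subseteq> BC" "\<gamma> = (\<lambda>x. \<Sum>f\<in>Fg. sc (cg f) (f x))"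
    unfolding op_span_def by blast
  define H where "H f = (if f \<in> Fg then sc (cg f) t else 0) + (if f \<in> F' then H' f else 0)" for f
  have "tens (\<gamma> x) t + (\<Sum>f\<in>F'. tens (f x) (H' f)) = (\<Sum>f\<in>Fg \<union> F'. tens (f x) (H f))" for x
  proof -
    have "tens (\<gamma> x) t = (\<Sum>f\<in>Fg. tens (f x) (if f \<in> Fg then sc (cg f) t else 0))"
      by (simp add: Fg(3) tens_sum_left tens_sc_left tens_sc_right)
    also have "\<dots> = (\<Sum>f\<in>Fg \<union> F'. tens (f x) (if f \<in> Fg then sc (cg f) t else 0))"
      by (rule sum.mono_neutral_left) (use Fg F' in auto)
    finally have 1: "tens (\<gamma> x) t = \<dots>" .
    have "(\<Sum>f\<in>F'. tens (f x) (H' f)) = (\<Sum>f\<in>F'. tens (f x) (if f \<in> F' then H' f else 0))"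
      by simp
    also have "\<dots> = (\<Sum>f\<in>Fg \<union> F'. tens (f x) (if f \<in> F' then H' f else 0))"
      by (rule sum.mono_neutral_left) (use Fg F' in auto)
    finally have 2: "(\<Sum>f\<in>F'. tens (f x) (H' f)) = \<dots>" .
    from 1 2 show ?thesis by (simp add: H_def tens_add_right sum.distrib)
  qed
  then show ?case using Fg F' by (intro exI[of _ "Fg \<union> F'"] exI[of _ H]) (simp add: pr H')
qed

text \<open>For a derivation \<open>D\<close> vanishing on \<open>A \<otimes> e\<close>, the commutator of \<open>D\<close> with \<open>id \<otimes> L\<^sub>s\<close> lies in
  the centroid of \<open>A \<otimes> S\<close>, so by \<open>\<psi>\<close> it is some \<open>\<Sum> \<gamma>\<^sub>i \<otimes> L\<^bsub>t\<^sub>i\<^esub>\<close>; evaluating at \<open>x \<otimes> e\<close> gives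
  \<open>D (x \<otimes> s) = \<Sum> \<gamma>\<^sub>i x \<otimes> t\<^sub>i\<close>.\<close>
lemma derivation_on_tens_BC_expansion:
  assumes D: "D \<in> derivations MT" and D_unit: "\<And>x. D (tens x e) = 0"
  shows "\<exists>F H. finite F \<and> F \<subseteq> BC \<and> (\<forall>x. D (tens x s) = (\<Sum>f\<in>F. tens (f x) (H f)))"
proof -
  let ?L = "optens (\<lambda>x. x) (MS s)"
  have "(\<lambda>x. x) \<in> centroid MA" by (simp add: centroid_def lin_iff_lin_map)
  then have "?L \<in> centroid MT" using psi by (simp add: psi_iso_def)
  then have "(\<lambda>u. D (?L u) - ?L (D u)) \<in> centroid MT"
    by (rule commutator_in_centroid[OF bilin_tmult D])
  then obtain ps where ps: "\<forall>(\<gamma>, t)\<in>set ps. \<gamma> \<in> centroid MA"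
      "(\<lambda>u. D (?L u) - ?L (D u)) = (\<lambda>u. \<Sum>(\<gamma>, t)\<leftarrow>ps. optens \<gamma> (MS t) u)"
    using psi unfolding psi_iso_def by blast
  have "D (tens x s) = (\<Sum>(\<gamma>, t)\<leftarrow>ps. tens (\<gamma> x) t)" for x
  proof -
    have "D (tens x s) = D (?L (tens x e)) - ?L (D (tens x e))"
      by (simp add: optens_tens[OF lin_map_id lin_map_MS_right] unit_S_right D_unit lin_map_zero[OF lin_map_optens])
    also have "\<dots> = (\<Sum>(\<gamma>, t)\<leftarrow>ps. optens \<gamma> (MS t) (tens x e))"
      using fun_cong[OF ps(2), of "tens x e"] by simp
    also have "\<dots> = (\<Sum>(\<gamma>, t)\<leftarrow>ps. tens (\<gamma> x) t)"
      using ps(1) by (intro arg_cong[where f = sum_list] map_cong refl)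
        (auto simp: optens_tens[OF centroid_lin_map lin_map_MS_right] unit_S_right)
    finally show ?thesis .
  qed
  then show ?thesis using sum_list_tens_BC_expansion[OF ps(1)] by auto
qed

definition BC_coeffs :: "('a \<times> 'b,'k) op \<Rightarrow> (('a,'k) op \<Rightarrow> ('b,'k) op) \<Rightarrow> bool" where
  "BC_coeffs D h \<longleftrightarrow> (\<forall>f. f \<notin> BC \<longrightarrow> h f = (\<lambda>_. 0)) \<and> (\<forall>s. finite {f. h f s \<noteq> 0})
     \<and> (\<forall>x s. D (tens x s) = (\<Sum>f | h f s \<noteq> 0. tens (f x) (h f s)))"

lemma BC_coeffs_sum:
  assumes "BC_coeffs D h" "finite G" "{f. h f s \<noteq> 0} \<subseteq> G"
  shows "D (tens x s) = (\<Sum>f\<in>G. tens (f x) (h f s))"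
proof -
  have "D (tens x s) = (\<Sum>f | h f s \<noteq> 0. tens (f x) (h f s))"
    using assms(1) by (simp add: BC_coeffs_def)
  also have "\<dots> = (\<Sum>f\<in>G. tens (f x) (h f s))"
    by (rule sum.mono_neutral_left[OF assms(2,3)]) auto
  finally show ?thesis .
qed

lemma BC_coeffs_support: "BC_coeffs D h \<Longrightarrow> {f. h f s \<noteq> 0} \<subseteq> BC"
  unfolding BC_coeffs_def by auto

lemma BC_coeffs_exist:
  assumes "\<And>s. \<exists>F H. finite F \<and> F \<subseteq> BC \<and> (\<forall>x. D (tens x s) = (\<Sum>f\<in>F. tens (f x) (H f)))"
  obtains h where "BC_coeffs D h"
proof -
  have "\<forall>s. \<exists>F H. finite F \<and> F \<subseteq> BC \<and> (\<forall>x. D (tens x s) = (\<Sum>f\<in>F. tens (f x) (H f)))"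
    using assms by blast
  then obtain Fs Hs where "\<forall>s. finite (Fs s) \<and> Fs s \<subseteq> BC
      \<and> (\<forall>x. D (tens x s) = (\<Sum>f\<in>Fs s. tens (f x) (Hs s f)))"
    unfolding choice_iff by blast
  then have FH: "\<And>s. finite (Fs s)" "\<And>s. Fs s \<subseteq> BC"
    "\<And>s x. D (tens x s) = (\<Sum>f\<in>Fs s. tens (f x) (Hs s f))"
    by blast+
  define h where "h f s = (if f \<in> Fs s then Hs s f else 0)" for f s
  have supp: "{f. h f s \<noteq> 0} \<subseteq> Fs s" for s by (auto simp: h_def)
  have "D (tens x s) = (\<Sum>f | h f s \<noteq> 0. tens (f x) (h f s))" for x s
  proof -
    have "D (tens x s) = (\<Sum>f\<in>Fs s. tens (f x) (h f s))" by (simp add: FH(3) h_def)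
    also have "\<dots> = (\<Sum>f | h f s \<noteq> 0. tens (f x) (h f s))"
      using supp FH(1) by (intro sum.mono_neutral_right) auto
    finally show ?thesis .
  qed
  moreover have "h f = (\<lambda>_. 0)" if "f \<notin> BC" for f
    using FH(2) that by (auto simp: h_def fun_eq_iff)
  moreover have "finite {f. h f s \<noteq> 0}" for s
    using supp FH(1) by (rule finite_subset)
  ultimately show ?thesis by (intro that[of h]) (simp add: BC_coeffs_def)
qed

lemma BC_coeffs_lin_map:
  assumes lD: "lin_map D" and h: "BC_coeffs D h"
  shows "lin_map (h f)"
proof -
  note supp_fin = h[unfolded BC_coeffs_def, THEN conjunct2, THEN conjunct1, rule_format]
  have "h f (s + t) = h f s + h f t" for s t
  proof -
    let ?G = "{f. h f (s + t) \<noteq> 0} \<union> {f. h f s \<noteq> 0} \<union> {f. h f t \<noteq> 0}"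
    have G: "finite ?G" "?G \<subseteq> BC" using supp_fin BC_coeffs_support[OF h] by auto
    have expand: "D (tens x s') = (\<Sum>f\<in>?G. tens (f x) (h f s'))" if "s' \<in> {s + t, s, t}" for s' x
      using that by (auto intro!: BC_coeffs_sum[OF h G(1)])
    have "(\<Sum>f\<in>?G. tens (f x) (h f (s + t))) = D (tens x (s + t))" for x
      by (simp add: expand)
    also have "D (tens x (s + t)) = D (tens x s) + D (tens x t)" for x
      by (simp add: tens_add_right lin_map_add[OF lD])
    also have "D (tens x s) + D (tens x t) = (\<Sum>f\<in>?G. tens (f x) (h f s + h f t))" for x
      by (simp add: expand tens_add_right sum.distrib)
    finally show ?thesis
      using tens_BC_coeffs_unique[OF G, of "\<lambda>f. h f (s + t)" "\<lambda>f. h f s + h f t" f]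
      by (cases "f \<in> ?G") simp_all
  qed
  moreover have "h f (sc r s) = sc r (h f s)" for r s
  proof -
    let ?G = "{f. h f (sc r s) \<noteq> 0} \<union> {f. h f s \<noteq> 0}"
    have G: "finite ?G" "?G \<subseteq> BC" using supp_fin BC_coeffs_support[OF h] by auto
    have expand: "D (tens x s') = (\<Sum>f\<in>?G. tens (f x) (h f s'))" if "s' \<in> {sc r s, s}" for s' x
      using that by (auto intro!: BC_coeffs_sum[OF h G(1)])
    have "(\<Sum>f\<in>?G. tens (f x) (h f (sc r s))) = D (tens x (sc r s))" for x
      by (simp add: expand)
    also have "D (tens x (sc r s)) = sc r (D (tens x s))" for x
      by (simp add: tens_sc_right lin_map_sc[OF lD])
    also have "sc r (D (tens x s)) = (\<Sum>f\<in>?G. tens (f x) (sc r (h f s)))" for x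
      by (simp add: expand tens_sc_right sc_sum_right)
    finally show ?thesis
      using tens_BC_coeffs_unique[OF G, of "\<lambda>f. h f (sc r s)" "\<lambda>f. sc r (h f s)" f]
      by (cases "f \<in> ?G") simp_all
  qed
  ultimately show ?thesis by (simp add: lin_map_def)
qed

text \<open>The Leibniz rule for \<open>h f\<close> holds after tensoring with \<open>f (x y)\<close> on the left, by
  comparing \<open>D\<close> on \<open>(x \<otimes> s)(y \<otimes> t)\<close>; since \<open>A\<close> is perfect, the products \<open>x y\<close> span \<open>A\<close>, and
  independence of \<open>BC\<close> then gives the rule itself.\<close>
lemma BC_coeffs_derivation:
  assumes D: "D \<in> derivations MT" and h: "BC_coeffs D h"
  shows "h f \<in> derivations MS"
proof -
  have lin_h: "lin_map (h f)" for f by (rule BC_coeffs_lin_map[OF derivation_lin_map[OF D] h])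
  have "h f (MS s t) = MS (h f s) t + MS s (h f t)" for s t
  proof -
    let ?G = "{f. h f (MS s t) \<noteq> 0} \<union> {f. h f s \<noteq> 0} \<union> {f. h f t \<noteq> 0}"
    have G: "finite ?G" "?G \<subseteq> BC"
      using h BC_coeffs_support[OF h] unfolding BC_coeffs_def by auto
    have expand: "D (tens x s') = (\<Sum>f\<in>?G. tens (f x) (h f s'))" if "s' \<in> {MS s t, s, t}" for s' x
      using that by (auto intro!: BC_coeffs_sum[OF h G(1)])
    let ?c = "\<lambda>f. h f (MS s t) - (MS (h f s) t + MS s (h f t))"
    have cf: "f (MA x y) = MA (f x) y" "f (MA x y) = MA x (f y)" if "f \<in> ?G" for f x y
      using that G(2) BC_centroid unfolding centroid_def by blast+
    have "(\<Sum>f\<in>?G. tens (f (MA x y)) (?c f)) = 0" for x y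
    proof -
      have "D (tens (MA x y) (MS s t)) = D (MT (tens x s) (tens y t))" by (simp add: MT_tens)
      also have "\<dots> = MT (D (tens x s)) (tens y t) + MT (tens x s) (D (tens y t))"
        using D by (simp add: derivations_def)
      also have "\<dots> = (\<Sum>f\<in>?G. tens (MA (f x) y) (MS (h f s) t) + tens (MA x (f y)) (MS s (h f t)))"
        by (simp add: expand lin_map_sum[OF lin_map_tmult_left] lin_map_sum[OF lin_map_tmult_right]
            MT_tens sum.distrib)
      also have "\<dots> = (\<Sum>f\<in>?G. tens (f (MA x y)) (MS (h f s) t + MS s (h f t)))"
      proof (rule sum.cong[OF refl])
        fix f assume "f \<in> ?G"
        then show "tens (MA (f x) y) (MS (h f s) t) + tens (MA x (f y)) (MS s (h f t))
            = tens (f (MA x y)) (MS (h f s) t + MS s (h f t))"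
          by (simp only: tens_add_right cf[symmetric])
      qed
      finally show ?thesis
        by (simp add: expand tens_diff_right sum_subtractf)
    qed
    moreover have "lin_map (\<lambda>z. \<Sum>f\<in>?G. tens (f z) (?c f))"
      by (rule lin_map_sum_fun, rule lin_map_compose[OF lin_map_tens_left BC_lin_map]) (use G in auto)
    ultimately have Z: "(\<Sum>f\<in>?G. tens (f z) (?c f)) = 0" for z
      by (rule perfect_lin_map_eq_0[OF A_perfect, rotated])
    have "?c f = 0" if "f \<in> ?G" for f
      by (rule tens_BC_coeffs_eq_0[OF G Z that])
    then show ?thesis
      by (cases "f \<in> ?G") (auto simp: lin_map_zero[OF lin_map_MS_left] lin_map_zero[OF lin_map_MS_right])
  qed
  then show ?thesis using lin_h by (simp add: derivations_def lin_iff_lin_map)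
qed

lemma BC_coeffs_opsum:
  assumes lD: "lin_map D" and h: "BC_coeffs D h"
  shows "D = opsum (\<lambda>f. optens f (h f))"
proof -
  have lin_h: "lin_map (h f)" for f by (rule BC_coeffs_lin_map[OF lD h])
  have supp: "finite {f. h f s \<noteq> 0}" "{f. h f s \<noteq> 0} \<subseteq> BC" for s
    using h BC_coeffs_support[OF h] unfolding BC_coeffs_def by auto
  have h_out: "f \<notin> BC \<Longrightarrow> h f = (\<lambda>_. 0)" for f
    using h unfolding BC_coeffs_def by blast
  have summable: "summable_fam h"
    unfolding summable_fam_def using supp(1) by blast
  show ?thesis
  proof (rule lin_map_eqI_tens[OF lD lin_map_opsum[OF summable_optens_right[OF summable] lin_map_optens]])
    fix x s
    have "opsum (\<lambda>f. optens f (h f)) (tens x s) = (\<Sum>f | h f s \<noteq> 0. optens f (h f) (tens x s))"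
    proof (rule opsum_eq_sum[OF supp(1)])
      fix f assume f: "f \<notin> {f. h f s \<noteq> 0}"
      show "optens f (h f) (tens x s) = 0"
      proof (cases "f \<in> BC")
        case True
        then show ?thesis using f by (simp add: optens_tens[OF BC_lin_map lin_h])
      qed (simp add: h_out)
    qed
    also have "\<dots> = (\<Sum>f | h f s \<noteq> 0. tens (f x) (h f s))"
      using supp(2) by (intro sum.cong refl optens_tens[OF BC_lin_map lin_h]) auto
    also have "\<dots> = D (tens x s)"
      using h by (simp add: BC_coeffs_def)
    finally show "D (tens x s) = opsum (\<lambda>f. optens f (h f)) (tens x s)" by simp
  qed
qed

lemma derivation_unit_zero_rtensor:
  assumes D: "D \<in> derivations MT" and D_unit: "\<And>x. D (tens x e) = 0"
  shows "D \<in> rtensor BC (derivations MS)"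
proof -
  obtain h where h: "BC_coeffs D h"
    using BC_coeffs_exist derivation_on_tens_BC_expansion[OF D D_unit] by blast
  then have "(\<forall>f\<in>BC. h f \<in> derivations MS) \<and> (\<forall>f. f \<notin> BC \<longrightarrow> h f = (\<lambda>_. 0)) \<and> summable_fam h"
    using BC_coeffs_derivation[OF D] unfolding BC_coeffs_def summable_fam_def by blast
  then show ?thesis
    unfolding rtensor_def BC_coeffs_opsum[OF derivation_lin_map[OF D] h] by blast
qed

theorem derivation_decompose:
  assumes d: "d \<in> derivations MT"
  obtains X Y where "X \<in> ltensor (derivations MA) (Lset MS UNIV)" "Y \<in> rtensor BC (derivations MS)"
    and "d = (\<lambda>u. X u + Y u)"
proof -
  obtain X where X: "X \<in> ltensor (derivations MA) (Lset MS UNIV)" "X \<in> derivations MT"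
    and X_unit: "\<And>x. X (tens x e) = d (tens x e)"
    using derivation_ltensor_part[OF d] by blast
  have "(\<lambda>u. d u - X u) \<in> derivations MT" by (rule derivation_diff[OF bilin_tmult d X(2)])
  then have "(\<lambda>u. d u - X u) \<in> rtensor BC (derivations MS)"
    by (rule derivation_unit_zero_rtensor) (simp add: X_unit)
  moreover have "d = (\<lambda>u. X u + (d u - X u))" by simp
  ultimately show ?thesis using X(1) that by blast
qed
end

subsection \<open>The graded components\<close>

lemma automorphism_lin_map: "automorphism M \<sigma> \<Longrightarrow> lin_map \<sigma>"
  by (simp add: automorphism_def lin_iff_lin_map)

locale graded_tensor_algebras = tensor_algebras MA MS BC
  for MA :: "('a,'k::field) prod" and MS :: "('b,'k) prod" and BC +
  fixes \<omega> :: 'k and m :: nat and \<sigma>1 :: "('a,'k) op" and \<sigma>2 :: "('b,'k) op"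
    and BCk :: "nat \<Rightarrow> ('a,'k) op set"
  assumes m_pos: "0 < m"
    and root: "\<omega> ^ m = 1" and primitive: "\<forall>i. 0 < i \<and> i < m \<longrightarrow> \<omega> ^ i \<noteq> 1"
    and aut1: "automorphism MA \<sigma>1" and per1: "\<sigma>1 ^^ m = id"
    and aut2: "automorphism MS \<sigma>2" and per2: "\<sigma>2 ^^ m = id"
    and basisCk: "\<forall>k<m. is_basis (centroid MA \<inter> End_deg m \<omega> \<sigma>1 k) (BCk k)"
begin

abbreviation \<sigma> :: "('a \<times> 'b,'k) op" where "\<sigma> \<equiv> optens \<sigma>1 \<sigma>2"

sublocale gA: graded_algebra m \<omega> \<sigma>1 MA
  using m_pos root primitive automorphism_lin_map[OF aut1] per1 A_alg aut1
  by unfold_locales (auto simp: automorphism_def)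

sublocale gS: graded_algebra m \<omega> \<sigma>2 MS
  using m_pos root primitive automorphism_lin_map[OF aut2] per2 S_alg aut2
  by unfold_locales (auto simp: automorphism_def)

lemma sigma_mult: "\<sigma> (MT u v) = MT (\<sigma> u) (\<sigma> v)"
proof (rule bilinear_eqI_tens[where \<Phi> = "\<lambda>u v. \<sigma> (MT u v)" and \<Psi> = "\<lambda>u v. MT (\<sigma> u) (\<sigma> v)"])
  show "lin_map (\<lambda>u. \<sigma> (MT u v))" for v by (rule lin_map_compose[OF lin_map_optens lin_map_tmult_left])
  show "lin_map (\<lambda>v. \<sigma> (MT u v))" for u by (rule lin_map_compose[OF lin_map_optens lin_map_tmult_right])
  show "lin_map (\<lambda>u. MT (\<sigma> u) (\<sigma> v))" for v by (rule lin_map_compose[OF lin_map_tmult_left lin_map_optens])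
  show "lin_map (\<lambda>v. MT (\<sigma> u) (\<sigma> v))" for u by (rule lin_map_compose[OF lin_map_tmult_right lin_map_optens])
  fix x s y t
  show "\<sigma> (MT (tens x s) (tens y t)) = MT (\<sigma> (tens x s)) (\<sigma> (tens y t))"
    using aut1 aut2
    by (simp add: MT_tens optens_tens[OF gA.lin_map_sigma gS.lin_map_sigma] automorphism_def)
qed

lemma sigma_period: "\<sigma> ^^ m = id"
proof
  fix u
  have "(\<sigma> ^^ m) u = optens (\<sigma>1 ^^ m) (\<sigma>2 ^^ m) u"
    by (rule optens_funpow[OF gA.lin_map_sigma gS.lin_map_sigma])
  then show "(\<sigma> ^^ m) u = id u" by (simp add: per1 per2 optens_id[folded id_def])
qed

sublocale gT: graded_algebra m \<omega> \<sigma> MT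
  using m_pos root primitive lin_map_optens sigma_period bilin_tmult sigma_mult
  by unfold_locales auto

lemma MS_End_deg: "s \<in> eigsp \<omega> \<sigma>2 l \<Longrightarrow> MS s \<in> End_deg m \<omega> \<sigma>2 l"
  unfolding gS.End_deg_iff using gS.lin_map_M_right gS.mult_V by blast

lemma optens_End_deg:
  assumes f: "f \<in> End_deg m \<omega> \<sigma>1 k" and g: "g \<in> End_deg m \<omega> \<sigma>2 l"
  shows "optens f g \<in> End_deg m \<omega> \<sigma> ((k + l) mod m)"
proof (rule gT.End_degI_commute[OF lin_map_optens])
  fix u
  have lf: "lin_map f" and lg: "lin_map g" using f g gA.End_deg_lin_map gS.End_deg_lin_map by auto
  have "\<sigma> (optens f g u) = optens (\<lambda>x. \<sigma>1 (f x)) (\<lambda>x. \<sigma>2 (g x)) u"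
    by (rule optens_compose[OF gA.lin_map_sigma gS.lin_map_sigma lf lg])
  also have "\<dots> = sc (\<omega> ^ k) (sc (\<omega> ^ l) (optens (\<lambda>x. f (\<sigma>1 x)) (\<lambda>x. g (\<sigma>2 x)) u))"
    by (simp add: gA.End_deg_commute[OF f] gS.End_deg_commute[OF g] optens_sc_left optens_sc_right)
  also have "optens (\<lambda>x. f (\<sigma>1 x)) (\<lambda>x. g (\<sigma>2 x)) u = optens f g (\<sigma> u)"
    by (rule optens_compose[OF lf lg gA.lin_map_sigma gS.lin_map_sigma, symmetric])
  finally show "\<sigma> (optens f g u) = sc (\<omega> ^ ((k + l) mod m)) (optens f g (\<sigma> u))"
    by (simp add: power_add gA.omega_power_mod[of "k + l", symmetric])
qed

lemma BCk_subset: "k < m \<Longrightarrow> BCk k \<subseteq> centroid MA \<inter> End_deg m \<omega> \<sigma>1 k"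
  using basisCk is_basis_subset by blast

lemma ltensor_homogeneous:
  assumes T: "T \<in> ltensor (derivations MA \<inter> End_deg m \<omega> \<sigma>1 k) (Lset MS (eigsp \<omega> \<sigma>2 l))"
  shows "T \<in> derivations MT \<inter> End_deg m \<omega> \<sigma> ((k + l) mod m)"
proof -
  obtain f :: "'a \<times> nat \<Rightarrow> ('a,'k) op" and g :: "'a \<times> nat \<Rightarrow> ('b,'k) op" where
    fg: "T = opsum (\<lambda>i. optens (f i) (g i))" "\<And>i. f i \<in> derivations MA \<inter> End_deg m \<omega> \<sigma>1 k"
    "\<And>i. g i \<in> Lset MS (eigsp \<omega> \<sigma>2 l)" "summable_fam f"
    using T unfolding ltensor_def by blast
  obtain s where s: "\<And>i. g i = MS (s i) \<and> s i \<in> eigsp \<omega> \<sigma>2 l"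
    using Lset_obtain[of g] fg(3) by blast
  have S: "summable_fam (\<lambda>i. optens (f i) (g i))" by (rule summable_optens_left[OF fg(4)])
  have "T \<in> derivations MT" unfolding fg(1)
    by (rule opsum_derivation[OF S _ bilin_tmult]) (use fg(2) s optens_derivation_mult in auto)
  moreover have "T \<in> End_deg m \<omega> \<sigma> ((k + l) mod m)" unfolding fg(1)
    by (rule gT.End_deg_opsum[OF S], rule optens_End_deg) (use fg(2) s MS_End_deg in auto)
  ultimately show ?thesis ..
qed

lemma rtensor_homogeneous:
  assumes T: "T \<in> rtensor (BCk k) (derivations MS \<inter> End_deg m \<omega> \<sigma>2 l)" and k: "k < m"
  shows "T \<in> derivations MT \<inter> End_deg m \<omega> \<sigma> ((k + l) mod m)"
proof -
  obtain g where g: "T = opsum (\<lambda>\<beta>. optens \<beta> (g \<beta>))"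
    "\<And>\<beta>. \<beta> \<in> BCk k \<Longrightarrow> g \<beta> \<in> derivations MS \<inter> End_deg m \<omega> \<sigma>2 l"
    "\<And>\<beta>. \<beta> \<notin> BCk k \<Longrightarrow> g \<beta> = (\<lambda>_. 0)" "summable_fam g"
    using T unfolding rtensor_def by blast
  have S: "summable_fam (\<lambda>\<beta>. optens \<beta> (g \<beta>))" by (rule summable_optens_right[OF g(4)])
  have z: "\<beta> \<notin> BCk k \<Longrightarrow> optens \<beta> (g \<beta>) = (\<lambda>u. 0)" for \<beta> by (rule ext) (simp add: g(3))
  have "T \<in> derivations MT" unfolding g(1)
  proof (rule opsum_derivation[OF S _ bilin_tmult])
    fix \<beta> show "optens \<beta> (g \<beta>) \<in> derivations MT"
      using g(2) BCk_subset[OF k] optens_centroid_derivation z derivation_0[OF bilin_tmult]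
      by (cases "\<beta> \<in> BCk k") auto
  qed
  moreover have "T \<in> End_deg m \<omega> \<sigma> ((k + l) mod m)" unfolding g(1)
  proof (rule gT.End_deg_opsum[OF S])
    fix \<beta> show "optens \<beta> (g \<beta>) \<in> End_deg m \<omega> \<sigma> ((k + l) mod m)"
      using g(2) BCk_subset[OF k] optens_End_deg z gT.End_deg_0
      by (cases "\<beta> \<in> BCk k") auto
  qed
  ultimately show ?thesis ..
qed

lemma ltensor_decompose_degrees:
  assumes X: "X \<in> ltensor (derivations MA) (Lset MS UNIV)"
  obtains Z where "\<And>k l. Z k l \<in> ltensor (derivations MA \<inter> End_deg m \<omega> \<sigma>1 k) (Lset MS (eigsp \<omega> \<sigma>2 l))"
    and "X = (\<lambda>u. \<Sum>k<m. \<Sum>l<m. Z k l u)"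
proof -
  obtain f :: "'a \<times> nat \<Rightarrow> ('a,'k) op" and g :: "'a \<times> nat \<Rightarrow> ('b,'k) op" where
    fg: "X = opsum (\<lambda>i. optens (f i) (g i))" "\<And>i. f i \<in> derivations MA"
    "\<And>i. g i \<in> Lset MS UNIV" "summable_fam f"
    using X unfolding ltensor_def by blast
  obtain s where s: "\<And>i. g i = MS (s i)" using Lset_obtain[of g UNIV] fg(3) by blast
  have lf: "lin_map (f i)" for i using fg(2) by (rule derivation_lin_map)
  define Z where "Z k l = opsum (\<lambda>i. optens (gA.hcomp (f i) k) (MS (gS.eig_proj l (s i))))" for k l
  have Sk: "summable_fam (\<lambda>i. gA.hcomp (f i) k)" for k by (rule gA.summable_hcomp[OF fg(4)])
  have "Z k l \<in> ltensor (derivations MA \<inter> End_deg m \<omega> \<sigma>1 k) (Lset MS (eigsp \<omega> \<sigma>2 l))" for k l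
    unfolding ltensor_def Z_def
  proof (intro CollectI exI conjI allI)
    show "gA.hcomp (f i) k \<in> derivations MA \<inter> End_deg m \<omega> \<sigma>1 k" for i
      using gA.hcomp_derivation[OF fg(2)] gA.hcomp_End_deg[OF lf] by blast
    show "MS (gS.eig_proj l (s i)) \<in> Lset MS (eigsp \<omega> \<sigma>2 l)" for i
      using gS.eig_proj_in_V by (auto simp: Lset_def)
  qed (rule refl, rule Sk)
  moreover have "X u = (\<Sum>k<m. \<Sum>l<m. Z k l u)" for u
  proof -
    have "optens (f i) (g i)
        = optens (\<lambda>x. \<Sum>k<m. gA.hcomp (f i) k x) (\<lambda>x. \<Sum>l<m. MS (gS.eig_proj l (s i)) x)" for i
    proof (rule arg_cong2[where f = optens])
      show "f i = (\<lambda>x. \<Sum>k<m. gA.hcomp (f i) k x)" by (rule gA.hcomp_expand[OF lf])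
      show "g i = (\<lambda>x. \<Sum>l<m. MS (gS.eig_proj l (s i)) x)"
        unfolding s by (rule ext, rule gS.lin_map_eq_sum_eig_proj[OF lin_map_MS_left])
    qed
    then show ?thesis
      unfolding fg(1) Z_def by (simp add: opsum_optens_sums summable_optens_left[OF Sk])
  qed
  ultimately show ?thesis using that by blast
qed

lemma rtensor_hcomp_pieces:
  assumes S: "summable_fam h" and h: "\<And>\<gamma>. h \<gamma> \<in> derivations MS" and k: "k < m"
  shows "opsum (\<lambda>\<gamma>. optens (if \<gamma> \<in> BC then gA.hcomp \<gamma> k else (\<lambda>x. 0)) (gS.hcomp (h \<gamma>) l))
      \<in> rtensor (BCk k) (derivations MS \<inter> End_deg m \<omega> \<sigma>2 l)"
proof (rule rtensorI_span[OF gS.summable_hcomp[OF S]])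
  have "gA.hcomp \<gamma> k \<in> centroid MA \<inter> End_deg m \<omega> \<sigma>1 k" if "\<gamma> \<in> BC" for \<gamma>
    using gA.hcomp_centroid[OF BC_centroid] gA.hcomp_End_deg[OF BC_lin_map] that by blast
  then show "(if \<gamma> \<in> BC then gA.hcomp \<gamma> k else (\<lambda>x. 0)) \<in> op_span (BCk k)" for \<gamma>
    using is_basis_span basisCk k op_span_0 by auto
  show "gS.hcomp (h \<gamma>) l \<in> derivations MS \<inter> End_deg m \<omega> \<sigma>2 l" for \<gamma>
    using gS.hcomp_derivation[OF h] gS.hcomp_End_deg[OF derivation_lin_map[OF h]] by blast
  show "(\<lambda>x. sc r (w x)) \<in> derivations MS \<inter> End_deg m \<omega> \<sigma>2 l"
    if "w \<in> derivations MS \<inter> End_deg m \<omega> \<sigma>2 l" for w r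
    using that derivation_scale[OF S_alg] gS.End_deg_scale by blast
  show "opsum F \<in> derivations MS \<inter> End_deg m \<omega> \<sigma>2 l"
    if "summable_fam F" "\<And>\<gamma>. F \<gamma> \<in> derivations MS \<inter> End_deg m \<omega> \<sigma>2 l" for F :: "('a,'k) op \<Rightarrow> ('b,'k) op"
    using opsum_derivation[OF that(1) _ S_alg] gS.End_deg_opsum[OF that(1)] that(2) by blast
qed

lemma rtensor_decompose_degrees:
  assumes Y: "Y \<in> rtensor BC (derivations MS)"
  obtains W where "\<And>k l. k < m \<Longrightarrow> W k l \<in> rtensor (BCk k) (derivations MS \<inter> End_deg m \<omega> \<sigma>2 l)"
    and "Y = (\<lambda>u. \<Sum>k<m. \<Sum>l<m. W k l u)"
proof -
  obtain h where h: "Y = opsum (\<lambda>\<gamma>. optens \<gamma> (h \<gamma>))" "\<And>\<gamma>. \<gamma> \<in> BC \<Longrightarrow> h \<gamma> \<in> derivations MS"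
    "\<And>\<gamma>. \<gamma> \<notin> BC \<Longrightarrow> h \<gamma> = (\<lambda>_. 0)" "summable_fam h"
    using Y unfolding rtensor_def by blast
  have h_derivation: "h \<gamma> \<in> derivations MS" for \<gamma>
    by (cases "\<gamma> \<in> BC") (auto simp: h(2,3) derivation_0[OF S_alg])
  define \<phi> where "\<phi> k \<gamma> = (if \<gamma> \<in> BC then gA.hcomp \<gamma> k else (\<lambda>x. 0))" for k \<gamma>
  define h' where "h' l \<gamma> = gS.hcomp (h \<gamma>) l" for l \<gamma>
  define W where "W k l = opsum (\<lambda>\<gamma>. optens (\<phi> k \<gamma>) (h' l \<gamma>))" for k l
  have "W k l \<in> rtensor (BCk k) (derivations MS \<inter> End_deg m \<omega> \<sigma>2 l)" if "k < m" for k l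
    unfolding W_def \<phi>_def h'_def by (rule rtensor_hcomp_pieces[OF h(4) h_derivation that])
  moreover have "Y u = (\<Sum>k<m. \<Sum>l<m. W k l u)" for u
  proof -
    have "optens \<gamma> (h \<gamma>) = optens (\<lambda>x. \<Sum>k<m. \<phi> k \<gamma> x) (\<lambda>x. \<Sum>l<m. h' l \<gamma> x)" for \<gamma>
    proof (cases "\<gamma> \<in> BC")
      case True
      show ?thesis
      proof (rule arg_cong2[where f = optens])
        show "\<gamma> = (\<lambda>x. \<Sum>k<m. \<phi> k \<gamma> x)"
          using gA.hcomp_expand[OF BC_lin_map[OF True]] True by (simp add: \<phi>_def)
        show "h \<gamma> = (\<lambda>x. \<Sum>l<m. h' l \<gamma> x)"
          unfolding h'_def by (rule gS.hcomp_expand[OF derivation_lin_map[OF h_derivation]])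
      qed
    qed (simp add: h(3) \<phi>_def fun_eq_iff)
    moreover have "summable_fam (\<lambda>\<gamma>. optens (\<phi> k \<gamma>) (h' l \<gamma>))" for k l
      unfolding h'_def by (rule summable_optens_right[OF gS.summable_hcomp[OF h(4)]])
    ultimately show ?thesis
      unfolding h(1) W_def by (simp add: opsum_optens_sums)
  qed
  ultimately show ?thesis using that by blast
qed

text \<open>In the notation of the paper: \<open>DT j = Der(A \<otimes> S)\<^sub>j\<close>, \<open>LT = Der(A) \<otimes>\<leftarrow> S\<close>,
  \<open>RT = C(A) \<otimes>\<rightarrow> Der(S)\<close>, and \<open>ZL j\<close>, \<open>ZR j\<close> are the sums over \<open>k\<close> of their graded pieces.\<close>
abbreviation "DT j \<equiv> derivations MT \<inter> End_deg m \<omega> \<sigma> j"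
abbreviation "LT \<equiv> ltensor (derivations MA) (Lset MS UNIV)"
abbreviation "RT \<equiv> rtensor BC (derivations MS)"
abbreviation "ZL j \<equiv> zsum m (\<lambda>k. ltensor (derivations MA \<inter> End_deg m \<omega> \<sigma>1 k)
    (Lset MS (eigsp \<omega> \<sigma>2 ((j + m - k) mod m))))"
abbreviation "ZR j \<equiv> zsum m (\<lambda>k. rtensor (BCk k)
    (derivations MS \<inter> End_deg m \<omega> \<sigma>2 ((j + m - k) mod m)))"

lemma add_diff_mod: "k < m \<Longrightarrow> j < m \<Longrightarrow> (k + (j + m - k) mod m) mod m = j"
  using add_mod_eq_iff[of "(j + m - k) mod m" m k j] m_pos by (simp add: add.commute)

lemma ZL_subset: "j < m \<Longrightarrow> ZL j \<subseteq> LT \<inter> DT j"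
proof
  fix x assume j: "j < m" and "x \<in> ZL j"
  then obtain T where T: "x = (\<lambda>u. \<Sum>k<m. T k u)"
    "\<And>k. k < m \<Longrightarrow> T k \<in> ltensor (derivations MA \<inter> End_deg m \<omega> \<sigma>1 k) (Lset MS (eigsp \<omega> \<sigma>2 ((j + m - k) mod m)))"
    unfolding zsum_def by blast
  have "T k \<in> DT j" if "k < m" for k
    using ltensor_homogeneous[OF T(2)[OF that]] add_diff_mod[OF that j] by simp
  then have "x \<in> derivations MT" "x \<in> End_deg m \<omega> \<sigma> j"
    unfolding T(1) by (auto intro!: derivation_sum[OF bilin_tmult] gT.End_deg_sum)
  moreover have "x \<in> LT"
    unfolding T(1) by (rule ltensor_sum[OF T(2)]) (auto simp: Lset_def intro: derivation_0[OF A_alg])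
  ultimately show "x \<in> LT \<inter> DT j" by simp
qed

lemma ZR_subset: "j < m \<Longrightarrow> ZR j \<subseteq> RT \<inter> DT j"
proof
  fix x assume j: "j < m" and "x \<in> ZR j"
  then obtain T where T: "x = (\<lambda>u. \<Sum>k<m. T k u)"
    "\<And>k. k < m \<Longrightarrow> T k \<in> rtensor (BCk k) (derivations MS \<inter> End_deg m \<omega> \<sigma>2 ((j + m - k) mod m))"
    unfolding zsum_def by blast
  have "T k \<in> DT j" if "k < m" for k
    using rtensor_homogeneous[OF T(2)[OF that] that] add_diff_mod[OF that j] by simp
  then have "x \<in> derivations MT" "x \<in> End_deg m \<omega> \<sigma> j"
    unfolding T(1) by (auto intro!: derivation_sum[OF bilin_tmult] gT.End_deg_sum)
  moreover have "x \<in> RT"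
    unfolding T(1)
  proof (rule rtensor_sum[OF T(2)])
    show "BCk k \<subseteq> op_span BC" if "k < m" for k
      using BCk_subset[OF that] is_basis_span[OF basisC] by blast
    show "(\<lambda>x. 0) \<in> derivations MS" by (rule derivation_0[OF S_alg])
    show "(\<lambda>x. sc r (w x)) \<in> derivations MS" if "w \<in> derivations MS" for w r
      using derivation_scale[OF S_alg that] .
    show "opsum F \<in> derivations MS"
      if "summable_fam F" "\<And>i. F i \<in> derivations MS" for F :: "nat \<times> ('a,'k) op \<Rightarrow> ('b,'k) op"
      using opsum_derivation[OF that S_alg] .
  qed auto
  ultimately show "x \<in> RT \<inter> DT j" by simp
qed

lemma hcomp_LT:
  assumes "X \<in> LT" "j < m"
  shows "gT.hcomp X j \<in> ZL j"
proof -
  obtain Z where Z: "\<And>k l. Z k l \<in> ltensor (derivations MA \<inter> End_deg m \<omega> \<sigma>1 k) (Lset MS (eigsp \<omega> \<sigma>2 l))"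
    and X: "X = (\<lambda>u. \<Sum>k<m. \<Sum>l<m. Z k l u)"
    using ltensor_decompose_degrees[OF assms(1)] by blast
  have "gT.hcomp X j = (\<lambda>u. \<Sum>k<m. Z k ((j + m - k) mod m) u)"
    unfolding X using ltensor_homogeneous[OF Z] \<open>j < m\<close> by (intro gT.hcomp_double_sum) auto
  then show ?thesis unfolding zsum_def using Z by auto
qed

lemma hcomp_RT:
  assumes "Y \<in> RT" "j < m"
  shows "gT.hcomp Y j \<in> ZR j"
proof -
  obtain W where W: "\<And>k l. k < m \<Longrightarrow> W k l \<in> rtensor (BCk k) (derivations MS \<inter> End_deg m \<omega> \<sigma>2 l)"
    and Y: "Y = (\<lambda>u. \<Sum>k<m. \<Sum>l<m. W k l u)"
    using rtensor_decompose_degrees[OF assms(1)] by blast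
  have "gT.hcomp Y j = (\<lambda>u. \<Sum>k<m. W k ((j + m - k) mod m) u)"
    unfolding Y using rtensor_homogeneous[OF W] \<open>j < m\<close> by (intro gT.hcomp_double_sum) auto
  then show ?thesis unfolding zsum_def using W by auto
qed

lemma derivations_eq_zsum: "derivations MT = zsum m DT"
proof
  show "derivations MT \<subseteq> zsum m DT"
  proof
    fix d assume d: "d \<in> derivations MT"
    then have "d = (\<lambda>u. \<Sum>k<m. gT.hcomp d k u)"
      using gT.sum_hcomp[OF derivation_lin_map] by auto
    moreover have "gT.hcomp d k \<in> DT k" for k
      using gT.hcomp_derivation[OF d] gT.hcomp_End_deg[OF derivation_lin_map[OF d]] by blast
    ultimately show "d \<in> zsum m DT" unfolding zsum_def by blast
  qed
  show "zsum m DT \<subseteq> derivations MT"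
  proof
    fix x assume "x \<in> zsum m DT"
    then obtain T where T: "x = (\<lambda>u. \<Sum>k<m. T k u)" "\<And>k. k < m \<Longrightarrow> T k \<in> DT k"
      unfolding zsum_def by blast
    show "x \<in> derivations MT"
      unfolding T(1) by (rule derivation_sum[OF bilin_tmult]) (use T(2) in auto)
  qed
qed

lemma LT_inter_DT: "j < m \<Longrightarrow> LT \<inter> DT j = ZL j"
  using hcomp_LT gT.hcomp_self ZL_subset by fastforce

lemma RT_inter_DT: "j < m \<Longrightarrow> RT \<inter> DT j = ZR j"
  using hcomp_RT gT.hcomp_self ZR_subset by fastforce

lemma DT_direct_sum: "j < m \<Longrightarrow> direct_sum (DT j) (LT \<inter> DT j) (RT \<inter> DT j)"
  unfolding direct_sum_def
proof (intro conjI equalityI subsetI)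
  fix d assume j: "j < m" and d: "d \<in> DT j"
  then obtain X Y where XY: "X \<in> LT" "Y \<in> RT" "d = (\<lambda>u. X u + Y u)"
    using derivation_decompose by blast
  have "d = gT.hcomp d j" using gT.hcomp_self d j by simp
  also have "\<dots> = (\<lambda>u. gT.hcomp X j u + gT.hcomp Y j u)"
    unfolding XY(3) by (rule ext) (rule gT.hcomp_add)
  finally have "d = (\<lambda>u. gT.hcomp X j u + gT.hcomp Y j u)" .
  moreover have "gT.hcomp X j \<in> LT \<inter> DT j" "gT.hcomp Y j \<in> RT \<inter> DT j"
    using hcomp_LT[OF XY(1) j] hcomp_RT[OF XY(2) j] ZL_subset[OF j] ZR_subset[OF j] by blast+
  ultimately show "d \<in> {(\<lambda>u. x u + y u) |x y. x \<in> LT \<inter> DT j \<and> y \<in> RT \<inter> DT j}" by blast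
next
  fix d assume "d \<in> {(\<lambda>u. x u + y u) |x y. x \<in> LT \<inter> DT j \<and> y \<in> RT \<inter> DT j}"
  then show "d \<in> DT j" using derivation_add[OF bilin_tmult] gT.End_deg_add by blast
next
  fix d assume "d \<in> LT \<inter> DT j \<inter> (RT \<inter> DT j)"
  then show "d \<in> {\<lambda>u. 0}" using ltensor_inter_rtensor by blast
next
  fix d :: "('a \<times> 'b,'k) op" assume "d \<in> {\<lambda>u. 0}"
  moreover have "(\<lambda>u. 0) \<in> LT"
    by (rule ltensor_0[OF derivation_0[OF A_alg]]) (auto simp: Lset_def)
  moreover have "(\<lambda>u. 0) \<in> RT" by (rule rtensor_0[OF derivation_0[OF S_alg]])
  ultimately show "d \<in> LT \<inter> DT j \<inter> (RT \<inter> DT j)"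
    using derivation_0[OF bilin_tmult] gT.End_deg_0 by blast
qed

end

theorem lemma3p1:
  fixes \<omega> :: "'k::field" and m :: nat
    and MA :: "('a,'k) prod" and MS :: "('b,'k) prod"
    and \<sigma>1 :: "('a,'k) op" and \<sigma>2 :: "('b,'k) op"
    and BC :: "('a,'k) op set" and BCk :: "nat \<Rightarrow> ('a,'k) op set"
  assumes m_pos: "0 < m"
    and root: "\<omega> ^ m = 1" and primitive: "\<forall>i. 0 < i \<and> i < m \<longrightarrow> \<omega> ^ i \<noteq> 1"
    and A_alg: "bilin MA" and A_perfect: "perfect MA"
    and S_alg: "bilin MS" and S_cau: "comm_assoc_unital MS"
    and psi: "psi_iso MA MS"
    and aut1: "automorphism MA \<sigma>1" and per1: "\<sigma>1 ^^ m = id"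
    and aut2: "automorphism MS \<sigma>2" and per2: "\<sigma>2 ^^ m = id"
    and basisC: "is_basis (centroid MA) BC"
    and basisCk: "\<forall>k<m. is_basis (centroid MA \<inter> End_deg m \<omega> \<sigma>1 k) (BCk k)"
  shows "let MT = tmult MA MS; \<sigma> = optens \<sigma>1 \<sigma>2;
             DT = (\<lambda>j. derivations MT \<inter> End_deg m \<omega> \<sigma> j) in
         derivations MT = zsum m DT \<and>
         (\<forall>j<m.
            direct_sum (DT j) (ltensor (derivations MA) (Lset MS UNIV) \<inter> DT j)
                              (rtensor BC (derivations MS) \<inter> DT j)
          \<and> ltensor (derivations MA) (Lset MS UNIV) \<inter> DT j
              = zsum m (\<lambda>k. ltensor (derivations MA \<inter> End_deg m \<omega> \<sigma>1 k)
                                    (Lset MS (eigsp \<omega> \<sigma>2 ((j + m - k) mod m))))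
          \<and> rtensor BC (derivations MS) \<inter> DT j
              = zsum m (\<lambda>k. rtensor (BCk k)
                                    (derivations MS \<inter> End_deg m \<omega> \<sigma>2 ((j + m - k) mod m))))"
proof -
  interpret graded_tensor_algebras MA MS BC \<omega> m \<sigma>1 \<sigma>2 BCk
    by unfold_locales (fact assms)+
  show ?thesis
    unfolding Let_def
    using derivations_eq_zsum DT_direct_sum LT_inter_DT RT_inter_DT by blast
qed

end
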